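(* Let $S(1,2^n)$ be the spider obtained from $S(2^n)$ by adding a new leaf $u$ adjacent to the torso $v_0$, and identify $S(2^n)$ with the subgraph induced by $V(S(1,2^n))\setminus\{u\}$. Let $\alpha:V(S(1,2^n))\to\mathbb{N}$ satisfy $\alpha|_{S(2^n)}\in\mathcal{A}_k$ for some $k\ge2$. For $1\le j\le k$ define $\beta:V(S(1,2^n))\to\mathbb{N}$ by $\beta|_{S(2^n)}=\phi_j(\alpha|_{S(2^n)})$ and $\beta(u)=\alpha(u)$. Then $X_{S(1,2^n)}^\alpha+X_{S(1,2^n)}^\beta\ge_{2s}0$.
   Context: $S(2^n)$: torso $v_0$, vertices $v_i,v'_i$ ($1\le i\le n$), edges $v_0v_i,v_iv'_i$. $\mathcal{A}_k$: maps $\alpha$ on $V(S(2^n))$ with $\alpha(v_0)=1$, $\alpha(v_i)\le1$, $\alpha(v_i)+\alpha(v'_i)\le2$, $\#\{j:\alpha(v_j)=1,\alpha(v'_j)=0\}=k$. For $\alpha\in\mathcal{A}_k$ with $\{j:\alpha(v_j)=1,\alpha(v'_j)=0\}=\{i_1<\dots<i_k\}$, $\phi_j(\alpha)$ agrees with $\alpha$ except $\phi_j(\alpha)(v_{i_j})=2$, $\phi_j(\alpha)(v_0)=0$. $X_G^\alpha=\sum_\kappa\prod_ix_i^{a_i}$ over maps $\kappa$ with $|\kappa(v)|=\alpha(v)$ (sets of positive integers), disjoint on edges, $a_i=\#\{v:i\in\kappa(v)\}$. $f\ge_{2s}0$ means $[s_\lambda]f\ge0$ for all partitions $\lambda$ with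 at most two parts. *)

theory Defs
  imports Main
begin

text \<open>Vertices: Torso = v_0, Ucap = the extra leaf u, Mid i = v_i, End i = v'_i.\<close>
datatype svert = Torso | Ucap | Mid nat | End nat

definition spider_verts :: "nat \<Rightarrow> svert set" where
  "spider_verts n = {Torso} \<union> Mid ` {1..n} \<union> End ` {1..n}"

definition spider1_verts :: "nat \<Rightarrow> svert set" where
  "spider1_verts n = insert Ucap (spider_verts n)"

definition spider1_adj :: "nat \<Rightarrow> svert \<Rightarrow> svert \<Rightarrow> bool" where
  "spider1_adj n x y \<longleftrightarrow>
     (\<exists>i\<in>{1..n}. {x, y} = {Torso, Mid i} \<or> {x, y} = {Mid i, End i}) \<or> {x, y} = {Torso, Ucap}"

text \<open>A symmetric function (with integer coefficients) is represented by its coefficient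
  function on exponent vectors a (a i = exponent of x_i; variables indexed by positive
  integers, so a 0 is always 0 for genuine monomials).
  Coefficient of x^a in X_G^alpha = number of admissible kappa with exponent vector a.\<close>
definition Xcoef :: "'v set \<Rightarrow> ('v \<Rightarrow> 'v \<Rightarrow> bool) \<Rightarrow> ('v \<Rightarrow> nat) \<Rightarrow> (nat \<Rightarrow> nat) \<Rightarrow> int" where
  "Xcoef V E \<alpha> a = int (card {\<kappa> :: 'v \<Rightarrow> nat set.
      (\<forall>v. v \<notin> V \<longrightarrow> \<kappa> v = {}) \<and>
      (\<forall>v\<in>V. \<kappa> v \<subseteq> {1..} \<and> finite (\<kappa> v) \<and> card (\<kappa> v) = \<alpha> v) \<and>
      (\<forall>v\<in>V. \<forall>w\<in>V. E v w \<longrightarrow> \<kappa> v \<inter> \<kappa> w = {}) \<and>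
      (\<forall>i. a i = card {v\<in>V. i \<in> \<kappa> v})})"

definition is_partition :: "nat list \<Rightarrow> bool" where
  "is_partition la \<longleftrightarrow> sorted_wrt (\<ge>) la \<and> (\<forall>x\<in>set la. 0 < x)"

definition partitions_of :: "nat \<Rightarrow> nat list set" where
  "partitions_of d = {la. is_partition la \<and> sum_list la = d}"

definition cells :: "nat list \<Rightarrow> (nat \<times> nat) set" where
  "cells la = {(r, c). r < length la \<and> c < la ! r}"

definition ssyt :: "nat list \<Rightarrow> (nat \<Rightarrow> nat) \<Rightarrow> (nat \<times> nat \<Rightarrow> nat) set" where
  "ssyt la a = {T. (\<forall>p. p \<notin> cells la \<longrightarrow> T p = 0) \<and>
      (\<forall>p\<in>cells la. 1 \<le> T p) \<and>
      (\<forall>r c. (r, Suc c) \<in> cells la \<longrightarrow> T (r, c) \<le> T (r, Suc c)) \<and>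
      (\<forall>r c. (Suc r, c) \<in> cells la \<longrightarrow> T (r, c) < T (Suc r, c)) \<and>
      (\<forall>i. a i = card {p\<in>cells la. T p = i})}"

text \<open>Coefficient of x^a in the Schur function s_lambda (Kostka number).\<close>
definition schur :: "nat list \<Rightarrow> (nat \<Rightarrow> nat) \<Rightarrow> int" where
  "schur la a = int (card (ssyt la a))"

definition schur_coeff :: "nat \<Rightarrow> ((nat \<Rightarrow> nat) \<Rightarrow> int) \<Rightarrow> nat list \<Rightarrow> int" where
  "schur_coeff d f la = (THE c :: nat list \<Rightarrow> int.
      (\<forall>mu. c mu \<noteq> 0 \<longrightarrow> mu \<in> partitions_of d) \<and>
      (\<forall>a. f a = (\<Sum>mu\<in>partitions_of d. c mu * schur mu a))) la"

definition schur2_nonneg :: "nat \<Rightarrow> ((nat \<Rightarrow> nat) \<Rightarrow> int) \<Rightarrow> bool" where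
  "schur2_nonneg d f \<longleftrightarrow> (\<forall>la. is_partition la \<and> length la \<le> 2 \<longrightarrow> 0 \<le> schur_coeff d f la)"

definition special_legs :: "nat \<Rightarrow> (svert \<Rightarrow> nat) \<Rightarrow> nat set" where
  "special_legs n \<alpha> = {j\<in>{1..n}. \<alpha> (Mid j) = 1 \<and> \<alpha> (End j) = 0}"

text \<open>alpha restricted to V(S(2^n)) lies in A_k (values off V(S(2^n)) are irrelevant).\<close>
definition in_A :: "nat \<Rightarrow> nat \<Rightarrow> (svert \<Rightarrow> nat) \<Rightarrow> bool" where
  "in_A n k \<alpha> \<longleftrightarrow> \<alpha> Torso = 1 \<and> (\<forall>i\<in>{1..n}. \<alpha> (Mid i) \<le> 1 \<and> \<alpha> (Mid i) + \<alpha> (End i) \<le> 2)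
     \<and> card (special_legs n \<alpha>) = k"

definition phi :: "nat \<Rightarrow> nat \<Rightarrow> (svert \<Rightarrow> nat) \<Rightarrow> (svert \<Rightarrow> nat)" where
  "phi n j \<alpha> = \<alpha>(Mid (sorted_list_of_set (special_legs n \<alpha>) ! (j - 1)) := 2, Torso := 0)"

end

theory Submission
  imports Defs "HOL-Combinatorics.Transposition"
begin

text \<open>
  A symmetric function of degree \<open>d\<close> is determined by its coefficients at the monomials
  \<open>x\<^sup>\<mu>\<close>, \<open>\<mu>\<close> a partition, since the Kostka matrix is unitriangular for the dominance order;
  the Schur functions are symmetric by the Bender-Knuth involution. Only the two-row Schur
  functions survive the specialisation to \<open>x\<^sub>1, x\<^sub>2\<close>, whence the coefficient of
  \<open>s\<^bsub>(d - r, r)\<^esub>\<close> in \<open>f\<close> is the coefficient of \<open>x\<^sub>1\<^bsup>d - r\<^esup> x\<^sub>2\<^sup>r\<close> minus that of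
  \<open>x\<^sub>1\<^bsup>d - r + 1\<^esup> x\<^sub>2\<^bsup>r - 1\<^esup>\<close>: \<open>f \<ge>\<^sub>2\<^sub>s 0\<close> says that these coefficients increase towards
  the middle.

  For \<open>X\<^sup>\<alpha> + X\<^sup>\<beta>\<close> on the spider they count proper colourings with two colours, i.e. sets of
  weight-1 vertices. For \<open>\<alpha>\<close> the weight-1 vertices next to the torso form one bipartite
  component, coloured in two ways, and the others are isolated; for \<open>\<beta> = \<phi>\<^sub>j(\<alpha>)\<close> the torso has
  weight 0 and only the legs of weights \<open>(1, 1)\<close> impose a constraint. If \<open>\<alpha>(u) \<le> 1\<close>, then up to
  a shift the counts are the coefficients of \<open>(1 + x\<^sup>N) (1 + x)\<^sup>e\<close> and of \<open>2\<^sup>P (1 + x)\<^bsup>N + e\<^esup>\<close>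
  with \<open>N = \<alpha>(u) + k - 1\<close>, and their sum is symmetric and unimodal because \<open>N \<ge> 1\<close>, i.e. \<open>k \<ge> 2\<close>;
  if \<open>\<alpha>(u) = 2\<close> only the second count survives, and if \<open>\<alpha>(u) \<ge> 3\<close> neither does.
\<close>

section \<open>Semistandard tableaux\<close>

lemma mem_cells_iff: "(r, c) \<in> cells la \<longleftrightarrow> r < length la \<and> c < la ! r"
  by (simp add: cells_def)

lemma finite_cells: "finite (cells la)"
proof -
  have "cells la \<subseteq> {..<length la} \<times> {..<sum_list la + 1}"
    by (auto simp: cells_def less_Suc_eq_le intro: le_trans[OF less_imp_le elem_le_sum_list])
  then show ?thesis by (rule finite_subset) auto
qed

lemma finite_row_cells: "finite {c. (r, c) \<in> cells la \<and> P c}"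
  by (rule finite_subset[of _ "{..<la ! r}"]) (auto simp: mem_cells_iff)

lemma finite_cells_filter: "finite {p \<in> cells la. P p}"
  using finite_cells by simp

lemma partition_nth_antimono:
  assumes "is_partition la" "r \<le> r'" "r' < length la"
  shows "la ! r' \<le> la ! r"
proof (cases "r = r'")
  case False
  with assms show ?thesis unfolding is_partition_def
    using sorted_wrt_nth_less[of "(\<ge>)" la r r'] by auto
qed simp

lemma cell_above:
  assumes "is_partition la" "(Suc r, c) \<in> cells la"
  shows "(r, c) \<in> cells la"
  using assms partition_nth_antimono[of la r "Suc r"] by (auto simp: mem_cells_iff)

lemma card_cells_by_rows:
  "card {p \<in> cells la. P p} = (\<Sum>r<length la. card {c. (r, c) \<in> cells la \<and> P (r, c)})"
proof -
  have "{p \<in> cells la. P p} = (SIGMA r:{..<length la}. {c. (r, c) \<in> cells la \<and> P (r, c)})"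
    by (auto simp: mem_cells_iff)
  then show ?thesis by (simp add: card_SigmaI finite_row_cells)
qed

lemma ssyt_pos: "T \<in> ssyt la a \<Longrightarrow> p \<in> cells la \<Longrightarrow> 1 \<le> T p"
  by (simp add: ssyt_def)

lemma ssyt_content: "T \<in> ssyt la a \<Longrightarrow> a v = card {p \<in> cells la. T p = v}"
  by (simp add: ssyt_def)

lemma ssyt_row_mono:
  assumes "T \<in> ssyt la a" "(r, c') \<in> cells la" "c \<le> c'"
  shows "T (r, c) \<le> T (r, c')"
  using assms(3,2)
proof (induction c' rule: dec_induct)
  case (step m)
  then have "T (r, c) \<le> T (r, m)" by (simp add: mem_cells_iff)
  also have "T (r, m) \<le> T (r, Suc m)" using assms(1) step.prems by (simp add: ssyt_def)
  finally show ?case .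
qed simp

lemma ssyt_row_index_less:
  assumes "T \<in> ssyt la a" "is_partition la" "(r, c) \<in> cells la"
  shows "r < T (r, c)"
  using assms(3)
proof (induction r)
  case 0 then show ?case using ssyt_pos[OF assms(1), of "(0, c)"] by simp
next
  case (Suc r)
  then have "r < T (r, c)" using cell_above[OF assms(2)] by blast
  moreover have "T (r, c) < T (Suc r, c)" using assms(1) Suc.prems by (simp add: ssyt_def)
  ultimately show ?case by simp
qed

lemma down_closed_mem_iff_less_card:
  fixes D :: "nat set"
  assumes "finite D" "\<And>x y. x \<in> D \<Longrightarrow> y \<le> x \<Longrightarrow> y \<in> D"
  shows "x \<in> D \<longleftrightarrow> x < card D"
proof
  assume "x \<in> D"
  then have "{..x} \<subseteq> D" using assms(2) by auto
  from card_mono[OF assms(1) this] show "x < card D" by simp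
next
  assume "x < card D"
  show "x \<in> D"
  proof (rule ccontr)
    assume "x \<notin> D"
    then have "D \<subseteq> {..<x}" using assms(2) by (metis lessThan_iff not_le subsetI)
    then have "card D \<le> x" using card_mono[of "{..<x}" D] by simp
    with \<open>x < card D\<close> show False by simp
  qed
qed

definition row_le :: "nat list \<Rightarrow> (nat \<times> nat \<Rightarrow> nat) \<Rightarrow> nat \<Rightarrow> nat \<Rightarrow> nat" where
  "row_le la T j r = card {c. (r, c) \<in> cells la \<and> T (r, c) \<le> j}"

definition row_thresholds :: "nat list \<Rightarrow> (nat \<times> nat \<Rightarrow> nat) \<Rightarrow> (nat \<Rightarrow> nat \<Rightarrow> nat) \<Rightarrow> bool" where
  "row_thresholds la T R \<longleftrightarrow> (\<forall>r c j. (r, c) \<in> cells la \<longrightarrow> (T (r, c) \<le> j \<longleftrightarrow> c < R j r))"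

lemma ssyt_le_iff_row_le:
  assumes "T \<in> ssyt la a" "(r, c) \<in> cells la"
  shows "T (r, c) \<le> j \<longleftrightarrow> c < row_le la T j r"
proof -
  let ?D = "{c. (r, c) \<in> cells la \<and> T (r, c) \<le> j}"
  have "\<And>x y. x \<in> ?D \<Longrightarrow> y \<le> x \<Longrightarrow> y \<in> ?D"
    using ssyt_row_mono[OF assms(1)] by (auto simp: mem_cells_iff intro: le_trans)
  from down_closed_mem_iff_less_card[OF finite_row_cells this, where x = c]
  show ?thesis using assms(2) unfolding row_le_def by auto
qed

lemma row_thresholds_row_le: "T \<in> ssyt la a \<Longrightarrow> row_thresholds la T (row_le la T)"
  using ssyt_le_iff_row_le unfolding row_thresholds_def by blast

lemma row_le_bound: "row_le la T j r \<le> (if r < length la then la ! r else 0)"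
proof -
  have "{c. (r, c) \<in> cells la \<and> T (r, c) \<le> j} \<subseteq> (if r < length la then {..<la ! r} else {})"
    by (auto simp: mem_cells_iff)
  from card_mono[OF _ this] show ?thesis unfolding row_le_def by (auto split: if_splits)
qed

lemma row_le_mono: "j \<le> j' \<Longrightarrow> row_le la T j r \<le> row_le la T j' r"
  unfolding row_le_def by (rule card_mono) (use finite_row_cells in auto)

lemma row_le_Suc_Suc:
  assumes "T \<in> ssyt la a" "is_partition la"
  shows "row_le la T (Suc j) (Suc r) \<le> row_le la T j r"
  unfolding row_le_def
proof (rule card_mono[OF finite_row_cells], safe)
  fix c assume c: "(Suc r, c) \<in> cells la" "T (Suc r, c) \<le> Suc j"
  show "(r, c) \<in> cells la" using cell_above[OF assms(2) c(1)] .
  have "T (r, c) < T (Suc r, c)" using assms(1) c(1) by (simp add: ssyt_def)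
  then show "T (r, c) \<le> j" using c(2) by simp
qed

lemma row_le_eq_thresholds:
  assumes "row_thresholds la T R" "\<And>j r. R j r \<le> (if r < length la then la ! r else 0)"
  shows "row_le la T j r = R j r"
proof (cases "r < length la")
  case True
  have "{c. (r, c) \<in> cells la \<and> T (r, c) \<le> j} = {..<R j r}"
    using assms(1) assms(2)[of j r] True unfolding row_thresholds_def by (auto simp: mem_cells_iff)
  then show ?thesis by (simp add: row_le_def)
next
  case False
  then show ?thesis using assms(2)[of j r] row_le_bound[of la T j r] by simp
qed

lemma row_thresholds_count_letter:
  assumes "row_thresholds la T R" "1 \<le> v" "\<And>r. R v r \<le> (if r < length la then la ! r else 0)"
  shows "card {p \<in> cells la. T p = v} = (\<Sum>r<length la. R v r - R (v - 1) r)"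
  unfolding card_cells_by_rows
proof (rule sum.cong[OF refl])
  fix r assume r: "r \<in> {..<length la}"
  have "(r, c) \<in> cells la \<and> T (r, c) = v \<longleftrightarrow> c \<in> {R (v - 1) r..<R v r}" for c
  proof
    assume c: "(r, c) \<in> cells la \<and> T (r, c) = v"
    then have "T (r, c) \<le> v" "\<not> T (r, c) \<le> v - 1" using assms(2) by auto
    then show "c \<in> {R (v - 1) r..<R v r}"
      using assms(1) c unfolding row_thresholds_def by (auto simp: not_less)
  next
    assume c: "c \<in> {R (v - 1) r..<R v r}"
    then have rc: "(r, c) \<in> cells la" using r assms(3)[of r] by (auto simp: mem_cells_iff)
    then have "T (r, c) \<le> v" "\<not> T (r, c) \<le> v - 1" using assms(1) c unfolding row_thresholds_def by auto
    then show "(r, c) \<in> cells la \<and> T (r, c) = v" using rc by linarith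
  qed
  then have "{c. (r, c) \<in> cells la \<and> T (r, c) = v} = {R (v - 1) r..<R v r}" by blast
  then show "card {c. (r, c) \<in> cells la \<and> T (r, c) = v} = R v r - R (v - 1) r" by simp
qed

lemma row_thresholds_ssyt_rows_cols:
  assumes "row_thresholds la T R" "is_partition la" "\<And>j r. R (Suc j) (Suc r) \<le> R j r"
    "\<And>p. p \<in> cells la \<Longrightarrow> 1 \<le> T p"
  shows "\<And>r c. (r, Suc c) \<in> cells la \<Longrightarrow> T (r, c) \<le> T (r, Suc c)"
    and "\<And>r c. (Suc r, c) \<in> cells la \<Longrightarrow> T (r, c) < T (Suc r, c)"
proof -
  fix r c assume rc: "(r, Suc c) \<in> cells la"
  then have "Suc c < R (T (r, Suc c)) r" using assms(1) unfolding row_thresholds_def by blast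
  then have "c < R (T (r, Suc c)) r" by simp
  moreover have "(r, c) \<in> cells la" using rc by (auto simp: mem_cells_iff)
  ultimately show "T (r, c) \<le> T (r, Suc c)" using assms(1) unfolding row_thresholds_def by blast
next
  fix r c assume rc: "(Suc r, c) \<in> cells la"
  define v where "v = T (Suc r, c)"
  have v: "v = Suc (v - 1)" using assms(4)[OF rc] by (simp add: v_def)
  have "c < R v (Suc r)" using assms(1) rc unfolding row_thresholds_def v_def by blast
  also have "R v (Suc r) \<le> R (v - 1) r" using assms(3) v by metis
  finally have "T (r, c) \<le> v - 1"
    using assms(1) cell_above[OF assms(2) rc] unfolding row_thresholds_def by blast
  then show "T (r, c) < T (Suc r, c)" using v v_def by linarith
qed

section \<open>The Bender-Knuth involution\<close>

text \<open>The Bender-Knuth involution on the letters \<open>i\<close>, \<open>i + 1\<close>, described row by row through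
  the counts \<open>row_le\<close>: in row \<open>r\<close> the columns \<open>[bk_lo, bk_hi)\<close> hold exactly the letters
  \<open>i\<close>, \<open>i + 1\<close> not paired with an \<open>i + 1\<close> below or an \<open>i\<close> above, and the involution
  reverses the numbers of \<open>i\<close>'s and \<open>(i + 1)\<close>'s there; \<open>bk_bound\<close> is the new boundary.\<close>

abbreviation adj_transpose :: "nat \<Rightarrow> nat \<Rightarrow> nat" where
  "adj_transpose i \<equiv> transpose i (Suc i)"

definition bk_lo :: "nat list \<Rightarrow> (nat \<times> nat \<Rightarrow> nat) \<Rightarrow> nat \<Rightarrow> nat \<Rightarrow> nat" where
  "bk_lo la T i r = max (row_le la T (i - 1) r) (row_le la T (Suc i) (Suc r))"

definition bk_hi :: "nat list \<Rightarrow> (nat \<times> nat \<Rightarrow> nat) \<Rightarrow> nat \<Rightarrow> nat \<Rightarrow> nat" where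
  "bk_hi la T i r = (if r = 0 then row_le la T (Suc i) 0
     else min (row_le la T (Suc i) r) (row_le la T (i - 1) (r - 1)))"

definition bk_bound :: "nat list \<Rightarrow> (nat \<times> nat \<Rightarrow> nat) \<Rightarrow> nat \<Rightarrow> nat \<Rightarrow> nat" where
  "bk_bound la T i r = bk_lo la T i r + bk_hi la T i r - row_le la T i r"

definition bender_knuth :: "nat list \<Rightarrow> nat \<Rightarrow> (nat \<times> nat \<Rightarrow> nat) \<Rightarrow> nat \<times> nat \<Rightarrow> nat" where
  "bender_knuth la i T = (\<lambda>(r, c). if (r, c) \<in> cells la \<and> (T (r, c) = i \<or> T (r, c) = Suc i)
      then (if c < bk_bound la T i r then i else Suc i) else T (r, c))"

definition bk_row_le :: "nat list \<Rightarrow> (nat \<times> nat \<Rightarrow> nat) \<Rightarrow> nat \<Rightarrow> nat \<Rightarrow> nat \<Rightarrow> nat" where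
  "bk_row_le la T i j r = (if j = i then bk_bound la T i r else row_le la T j r)"

lemma bender_knuth_le_iff_other: "j \<noteq> i \<Longrightarrow> bender_knuth la i T p \<le> j \<longleftrightarrow> T p \<le> j"
  by (cases p) (auto simp: bender_knuth_def)

lemma sum_max_min_telescope:
  fixes x y :: "nat \<Rightarrow> int"
  shows "(\<Sum>r<Suc L. max (x r) (y (Suc r)) + (if r = 0 then y 0 else min (y r) (x (r - 1))))
    = (\<Sum>r<Suc L. x r + y r) + y (Suc L) - min (x L) (y (Suc L))"
  by (induction L) (auto simp: max_def min_def)

context
  fixes la :: "nat list" and T :: "nat \<times> nat \<Rightarrow> nat" and a :: "nat \<Rightarrow> nat" and i :: nat
  assumes T: "T \<in> ssyt la a" and la: "is_partition la" and i: "1 \<le> i"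
begin

lemma bk_bounds:
  "row_le la T (i - 1) r \<le> bk_lo la T i r" "bk_lo la T i r \<le> row_le la T i r"
  "row_le la T i r \<le> bk_hi la T i r" "bk_hi la T i r \<le> row_le la T (Suc i) r"
  "bk_lo la T i r \<le> bk_bound la T i r" "bk_bound la T i r \<le> bk_hi la T i r"
proof -
  have "row_le la T (i - 1) r \<le> row_le la T i r" "row_le la T i r \<le> row_le la T (Suc i) r"
    by (simp_all add: row_le_mono)
  moreover have "row_le la T (Suc i) (Suc r) \<le> row_le la T i r" by (rule row_le_Suc_Suc[OF T la])
  moreover have "row_le la T i r \<le> row_le la T (i - 1) (r - 1)" if "r > 0"
    using row_le_Suc_Suc[OF T la, of "i - 1" "r - 1"] that i by simp
  ultimately show lo: "bk_lo la T i r \<le> row_le la T i r" and hi: "row_le la T i r \<le> bk_hi la T i r"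
    by (auto simp: bk_lo_def bk_hi_def)
  show "row_le la T (i - 1) r \<le> bk_lo la T i r" "bk_hi la T i r \<le> row_le la T (Suc i) r"
    by (simp_all add: bk_lo_def bk_hi_def)
  show "bk_lo la T i r \<le> bk_bound la T i r" "bk_bound la T i r \<le> bk_hi la T i r"
    using lo hi by (simp_all add: bk_bound_def)
qed

lemma row_thresholds_bender_knuth: "row_thresholds la (bender_knuth la i T) (bk_row_le la T i)"
  unfolding row_thresholds_def
proof (intro allI impI)
  fix r c j assume rc: "(r, c) \<in> cells la"
  note le_iff = ssyt_le_iff_row_le[OF T rc]
  show "bender_knuth la i T (r, c) \<le> j \<longleftrightarrow> c < bk_row_le la T i j r"
  proof (cases "j = i")
    case False
    then show ?thesis using bender_knuth_le_iff_other le_iff by (simp add: bk_row_le_def)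
  next
    case True
    consider "T (r, c) = i \<or> T (r, c) = Suc i" | "T (r, c) < i" | "Suc i < T (r, c)" by linarith
    then show ?thesis
    proof cases
      case 1
      then show ?thesis using rc True by (auto simp: bender_knuth_def bk_row_le_def)
    next
      case 2
      then have "c < row_le la T (i - 1) r" using le_iff[of "i - 1"] by linarith
      then show ?thesis using 2 True bk_bounds(1,5)[of r] by (auto simp: bender_knuth_def bk_row_le_def)
    next
      case 3
      then have "\<not> c < row_le la T (Suc i) r" using le_iff[of "Suc i"] by simp
      then show ?thesis using 3 True bk_bounds(4,6)[of r] by (auto simp: bender_knuth_def bk_row_le_def)
    qed
  qed
qed

lemma bk_row_le_Suc_Suc: "bk_row_le la T i (Suc j) (Suc r) \<le> bk_row_le la T i j r"
proof -
  consider "j = i" | "Suc j = i" | "j \<noteq> i" "Suc j \<noteq> i" by blast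
  then show ?thesis
  proof cases
    case 1
    then show ?thesis using bk_bounds[of r] by (simp add: bk_row_le_def bk_lo_def)
  next
    case 2
    then have "bk_bound la T i (Suc r) \<le> row_le la T j r"
      using bk_bounds(6)[of "Suc r"] by (simp add: bk_hi_def flip: 2)
    then show ?thesis using 2 by (simp add: bk_row_le_def)
  next
    case 3
    then show ?thesis using row_le_Suc_Suc[OF T la] by (simp add: bk_row_le_def)
  qed
qed

lemma bk_row_le_bound: "bk_row_le la T i j r \<le> (if r < length la then la ! r else 0)"
  using row_le_bound[of la T j r] row_le_bound[of la T "Suc i" r] bk_bounds(4,6)[of r]
  by (auto simp: bk_row_le_def split: if_splits)

lemma row_le_bender_knuth: "row_le la (bender_knuth la i T) j r = bk_row_le la T i j r"
  by (rule row_le_eq_thresholds[OF row_thresholds_bender_knuth bk_row_le_bound])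

text \<open>Summed over the rows, \<open>bk_lo + bk_hi\<close> telescopes; hence the Bender-Knuth map exchanges
  the numbers of \<open>i\<close>'s and \<open>(i + 1)\<close>'s.\<close>

lemma bk_row_sums:
  "(\<Sum>r<length la. bk_bound la T i r - row_le la T (i - 1) r)
     = (\<Sum>r<length la. row_le la T (Suc i) r - row_le la T i r)"
  "(\<Sum>r<length la. row_le la T (Suc i) r - bk_bound la T i r)
     = (\<Sum>r<length la. row_le la T i r - row_le la T (i - 1) r)"
proof -
  let ?L = "length la"
  define x where "x r = int (row_le la T (i - 1) r)" for r
  define y where "y r = int (row_le la T (Suc i) r)" for r
  define z where "z r = int (row_le la T i r)" for r
  have lo_hi: "(\<Sum>r<?L. int (bk_lo la T i r) + int (bk_hi la T i r)) = (\<Sum>r<?L. x r + y r)"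
  proof (cases ?L)
    case (Suc L')
    have "y (Suc L') = 0" using row_le_bound[of la T "Suc i" "Suc L'"] Suc by (simp add: y_def)
    moreover have "(\<Sum>r<?L. int (bk_lo la T i r) + int (bk_hi la T i r))
       = (\<Sum>r<Suc L'. max (x r) (y (Suc r)) + (if r = 0 then y 0 else min (y r) (x (r - 1))))"
      unfolding Suc by (rule sum.cong) (auto simp: bk_lo_def bk_hi_def x_def y_def max_def min_def)
    ultimately show ?thesis using sum_max_min_telescope[of x y L'] Suc by (simp add: x_def)
  qed simp
  have "int (bk_bound la T i r - row_le la T (i - 1) r)
      = int (bk_lo la T i r) + int (bk_hi la T i r) - z r - x r"
    "int (row_le la T (Suc i) r - row_le la T i r) = y r - z r"
    "int (row_le la T (Suc i) r - bk_bound la T i r)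
      = y r - (int (bk_lo la T i r) + int (bk_hi la T i r) - z r)"
    "int (row_le la T i r - row_le la T (i - 1) r) = z r - x r" for r
    using bk_bounds[of r] by (simp_all add: bk_bound_def x_def y_def z_def of_nat_diff)
  then have "int (\<Sum>r<?L. bk_bound la T i r - row_le la T (i - 1) r)
      = int (\<Sum>r<?L. row_le la T (Suc i) r - row_le la T i r)"
    "int (\<Sum>r<?L. row_le la T (Suc i) r - bk_bound la T i r)
      = int (\<Sum>r<?L. row_le la T i r - row_le la T (i - 1) r)"
    unfolding of_nat_sum using lo_hi by (simp_all add: sum.distrib sum_subtractf)
  then show "(\<Sum>r<?L. bk_bound la T i r - row_le la T (i - 1) r)
      = (\<Sum>r<?L. row_le la T (Suc i) r - row_le la T i r)"
    "(\<Sum>r<?L. row_le la T (Suc i) r - bk_bound la T i r)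
      = (\<Sum>r<?L. row_le la T i r - row_le la T (i - 1) r)"
    by (simp_all only: of_nat_eq_iff)
qed

lemma bender_knuth_ssyt: "bender_knuth la i T \<in> ssyt la (a \<circ> adj_transpose i)"
proof -
  let ?B = "bender_knuth la i T"
  have zero: "\<forall>p. p \<notin> cells la \<longrightarrow> ?B p = 0" using T by (auto simp: ssyt_def bender_knuth_def)
  have pos: "\<And>p. p \<in> cells la \<Longrightarrow> 1 \<le> ?B p" using ssyt_pos[OF T] i by (auto simp: bender_knuth_def)
  note rows_cols = row_thresholds_ssyt_rows_cols[OF row_thresholds_bender_knuth la bk_row_le_Suc_Suc pos]
  have count_T: "card {p \<in> cells la. T p = v} = (\<Sum>r<length la. row_le la T v r - row_le la T (v - 1) r)"
    if "1 \<le> v" for v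
    by (rule row_thresholds_count_letter[OF row_thresholds_row_le[OF T] that row_le_bound])
  have count_B: "card {p \<in> cells la. ?B p = v}
      = (\<Sum>r<length la. bk_row_le la T i v r - bk_row_le la T i (v - 1) r)" if "1 \<le> v" for v
    by (rule row_thresholds_count_letter[OF row_thresholds_bender_knuth that bk_row_le_bound])
  have "(a \<circ> adj_transpose i) v = card {p \<in> cells la. ?B p = v}" for v
  proof -
    consider "v = i" | "v = Suc i" | "v \<noteq> i" "v \<noteq> Suc i" by blast
    then show ?thesis
    proof cases
      case 1
      then show ?thesis
        using ssyt_content[OF T, of "Suc i"] count_T[of "Suc i"] bk_row_sums(1) count_B[of i] i
        by (simp add: bk_row_le_def diff_less less_imp_neq)
    next
      case 2
      then show ?thesis
        using ssyt_content[OF T, of i] count_T[of i] bk_row_sums(2) count_B[of "Suc i"] i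
        by (simp add: bk_row_le_def)
    next
      case 3
      then have "{p \<in> cells la. ?B p = v} = {p \<in> cells la. T p = v}" by (auto simp: bender_knuth_def)
      then show ?thesis using 3 ssyt_content[OF T] by simp
    qed
  qed
  then show ?thesis unfolding ssyt_def using zero pos rows_cols by blast
qed

lemma bender_knuth_involutive: "bender_knuth la i (bender_knuth la i T) = T"
proof
  let ?B = "bender_knuth la i T"
  have "i - 1 \<noteq> i" using i by simp
  then have "row_le la ?B (i - 1) = row_le la T (i - 1)" "row_le la ?B (Suc i) = row_le la T (Suc i)"
    "row_le la ?B i = bk_bound la T i"
    using i by (simp_all add: fun_eq_iff row_le_bender_knuth bk_row_le_def)
  \<comment> \<open>\<open>bk_lo\<close> and \<open>bk_hi\<close> only involve the counts for \<open>i - 1\<close> and \<open>i + 1\<close>, which are unchanged\<close>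
  then have bound: "bk_bound la ?B i r = row_le la T i r" for r
    using bk_bounds[of r] by (simp add: bk_bound_def bk_lo_def bk_hi_def)
  fix p :: "nat \<times> nat"
  obtain r c where p: "p = (r, c)" by force
  show "bender_knuth la i ?B p = T p"
  proof (cases "(r, c) \<in> cells la \<and> (T (r, c) = i \<or> T (r, c) = Suc i)")
    case True
    have "T (r, c) \<le> i \<longleftrightarrow> c < row_le la T i r" using ssyt_le_iff_row_le[OF T] True by blast
    then show ?thesis using True p bound by (auto simp: bender_knuth_def)
  qed (auto simp: p bender_knuth_def)
qed

end

lemma schur_adj_transpose:
  assumes "is_partition la" "1 \<le> i"
  shows "schur la (a \<circ> adj_transpose i) = schur la a"
proof -
  have "a \<circ> adj_transpose i \<circ> adj_transpose i = a" by (simp add: comp_assoc)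
  then have "bender_knuth la i ` ssyt la (a \<circ> adj_transpose i) \<subseteq> ssyt la a"
    using bender_knuth_ssyt[OF _ assms(1) assms(2), of _ "a \<circ> adj_transpose i"] by auto
  then have "bij_betw (bender_knuth la i) (ssyt la a) (ssyt la (a \<circ> adj_transpose i))"
    using bender_knuth_ssyt[OF _ assms] bender_knuth_involutive[OF _ assms]
    by (intro bij_betw_byWitness[where f' = "bender_knuth la i"]) auto
  then show ?thesis unfolding schur_def by (simp add: bij_betw_same_card)
qed

section \<open>Kostka numbers\<close>

definition partition_content :: "nat list \<Rightarrow> nat \<Rightarrow> nat" where
  "partition_content mu i = (if 1 \<le> i \<and> i \<le> length mu then mu ! (i - 1) else 0)"

definition content2 :: "nat \<Rightarrow> nat \<Rightarrow> nat \<Rightarrow> nat" where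
  "content2 p q i = (if i = 1 then p else if i = 2 then q else 0)"

definition prefix_sum :: "nat \<Rightarrow> nat list \<Rightarrow> nat" where
  "prefix_sum j xs = sum_list (take j xs)"

definition superstandard :: "nat list \<Rightarrow> nat \<times> nat \<Rightarrow> nat" where
  "superstandard la = (\<lambda>(r, c). if (r, c) \<in> cells la then Suc r else 0)"

lemma prefix_sum_0 [simp]: "prefix_sum 0 xs = 0"
  by (simp add: prefix_sum_def)

lemma prefix_sum_Suc: "prefix_sum (Suc k) xs = prefix_sum k xs + (if k < length xs then xs ! k else 0)"
  by (simp add: prefix_sum_def take_Suc_conv_app_nth)

lemma sum_partition_content: "(\<Sum>v<j. partition_content mu (Suc v)) = prefix_sum j mu"
  by (induction j) (auto simp: partition_content_def prefix_sum_Suc)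

lemma card_cells_row: "card {p \<in> cells la. fst p = j} = (if j < length la then la ! j else 0)"
proof -
  have "{p \<in> cells la. fst p = j} = Pair j ` (if j < length la then {..<la ! j} else {})"
    by (auto simp: mem_cells_iff)
  then show ?thesis by (simp add: card_image inj_on_def)
qed

lemma card_cells_rows_below: "card {p \<in> cells la. fst p < j} = prefix_sum j la"
proof (induction j)
  case (Suc j)
  have "{p \<in> cells la. fst p < Suc j} = {p \<in> cells la. fst p < j} \<union> {p \<in> cells la. fst p = j}"
    by auto
  also have "card \<dots> = card {p \<in> cells la. fst p < j} + card {p \<in> cells la. fst p = j}"
    by (rule card_Un_disjoint) (auto simp: finite_cells_filter)
  finally show ?case using Suc card_cells_row by (simp add: prefix_sum_Suc)
qed (simp add: prefix_sum_def)

lemma card_cells: "card (cells la) = sum_list la"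
proof -
  have "cells la = {p \<in> cells la. fst p < length la}" by (auto simp: mem_cells_iff)
  then show ?thesis using card_cells_rows_below[of la "length la"] by (simp add: prefix_sum_def)
qed

lemma ssyt_card_le:
  assumes "T \<in> ssyt la a"
  shows "card {p \<in> cells la. T p \<le> j} = (\<Sum>v<j. a (Suc v))"
proof (induction j)
  case 0
  have e: "{p \<in> cells la. T p \<le> 0} = {}" using ssyt_pos[OF assms] by fastforce
  show ?case unfolding e by simp
next
  case (Suc j)
  have "{p \<in> cells la. T p \<le> Suc j} = {p \<in> cells la. T p \<le> j} \<union> {p \<in> cells la. T p = Suc j}"
    by auto
  also have "card \<dots> = card {p \<in> cells la. T p \<le> j} + card {p \<in> cells la. T p = Suc j}"
    by (rule card_Un_disjoint) (auto simp: finite_cells_filter)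
  finally show ?case using Suc ssyt_content[OF assms, of "Suc j"] by simp
qed

lemma ssyt_le_subset_rows_below:
  assumes "T \<in> ssyt la a" "is_partition la"
  shows "{p \<in> cells la. T p \<le> j} \<subseteq> {p \<in> cells la. fst p < j}"
  using ssyt_row_index_less[OF assms] by fastforce

lemma ssyt_content_dominated:
  assumes "T \<in> ssyt la (partition_content mu)" "is_partition la"
  shows "prefix_sum j mu \<le> prefix_sum j la"
proof -
  have "prefix_sum j mu = card {p \<in> cells la. T p \<le> j}"
    using ssyt_card_le[OF assms(1)] sum_partition_content by simp
  also have "\<dots> \<le> card {p \<in> cells la. fst p < j}"
    by (rule card_mono[OF finite_cells_filter ssyt_le_subset_rows_below[OF assms]])
  finally show ?thesis using card_cells_rows_below by simp
qed

lemma schur_content_dominated: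
  assumes "schur la (partition_content mu) \<noteq> 0" "is_partition la"
  shows "prefix_sum j mu \<le> prefix_sum j la"
proof -
  from assms(1) have "ssyt la (partition_content mu) \<noteq> {}" by (auto simp: schur_def)
  then obtain T where "T \<in> ssyt la (partition_content mu)" by blast
  then show ?thesis using ssyt_content_dominated assms(2) by blast
qed

lemma ssyt_own_content_eq_superstandard:
  assumes "T \<in> ssyt mu (partition_content mu)" "is_partition mu"
  shows "T = superstandard mu"
proof
  fix p :: "nat \<times> nat"
  obtain r c where p: "p = (r, c)" by (cases p)
  show "T p = superstandard mu p"
  proof (cases "(r, c) \<in> cells mu")
    case True
    have "card {p \<in> cells mu. T p \<le> Suc r} = card {p \<in> cells mu. fst p < Suc r}"
      using ssyt_card_le[OF assms(1)] sum_partition_content card_cells_rows_below by simp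
    then have eq: "{p \<in> cells mu. T p \<le> Suc r} = {p \<in> cells mu. fst p < Suc r}"
      using card_subset_eq[OF finite_cells_filter ssyt_le_subset_rows_below[OF assms]] by simp
    have "(r, c) \<in> {p \<in> cells mu. fst p < Suc r}" using True by simp
    then have "(r, c) \<in> {p \<in> cells mu. T p \<le> Suc r}" by (simp only: eq)
    then have "T (r, c) \<le> Suc r" by simp
    moreover have "r < T (r, c)" by (rule ssyt_row_index_less[OF assms True])
    ultimately show ?thesis using True p by (simp add: superstandard_def)
  next
    case False
    then show ?thesis using assms(1) p by (simp add: superstandard_def ssyt_def)
  qed
qed

lemma superstandard_ssyt:
  assumes "is_partition mu"
  shows "superstandard mu \<in> ssyt mu (partition_content mu)"
proof -
  let ?S = "superstandard mu"
  have "partition_content mu v = card {p \<in> cells mu. ?S p = v}" for v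
  proof (cases v)
    case 0
    then have e: "{p \<in> cells mu. ?S p = v} = {}" by (force simp: superstandard_def)
    show ?thesis unfolding e using 0 by (simp add: partition_content_def)
  next
    case (Suc w)
    then have "{p \<in> cells mu. ?S p = v} = {p \<in> cells mu. fst p = w}"
      by (auto simp: superstandard_def)
    then show ?thesis using Suc card_cells_row by (simp add: partition_content_def)
  qed
  moreover have "\<forall>r c. (r, Suc c) \<in> cells mu \<longrightarrow> ?S (r, c) \<le> ?S (r, Suc c)"
    by (simp add: mem_cells_iff superstandard_def)
  moreover have "\<forall>r c. (Suc r, c) \<in> cells mu \<longrightarrow> ?S (r, c) < ?S (Suc r, c)"
    using cell_above[OF assms] by (simp add: superstandard_def)
  moreover have "\<forall>p. p \<notin> cells mu \<longrightarrow> ?S p = 0" "\<forall>p\<in>cells mu. 1 \<le> ?S p"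
    by (auto simp: superstandard_def)
  ultimately show ?thesis unfolding ssyt_def by blast
qed

lemma schur_own_content: "is_partition mu \<Longrightarrow> schur mu (partition_content mu) = 1"
proof -
  assume mu: "is_partition mu"
  then have "ssyt mu (partition_content mu) = {superstandard mu}"
    using ssyt_own_content_eq_superstandard superstandard_ssyt by blast
  then show ?thesis by (simp add: schur_def)
qed

definition two_row_partition :: "nat \<Rightarrow> nat \<Rightarrow> nat list" where
  "two_row_partition d s = (if s = 0 then [d] else [d - s, s])"

definition two_letter_tableau :: "nat list \<Rightarrow> nat \<Rightarrow> nat \<times> nat \<Rightarrow> nat" where
  "two_letter_tableau la p = (\<lambda>(r, c). if (r, c) \<in> cells la then (if r = 0 \<and> c < p then 1 else 2) else 0)"

lemma partition_content_two: "partition_content [x, y] = content2 x y"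
  by (auto simp: partition_content_def content2_def fun_eq_iff)

lemma two_row_partition_inj: "two_row_partition d s = two_row_partition d s' \<Longrightarrow> s = s'"
  by (auto simp: two_row_partition_def split: if_splits)

lemma mem_cells_two_row_partition:
  "(r, c) \<in> cells (two_row_partition d s) \<longleftrightarrow> (r = 0 \<and> c < d - s) \<or> (r = 1 \<and> c < s)"
  by (cases s) (auto simp: two_row_partition_def mem_cells_iff nth_Cons split: nat.splits)

lemma two_row_partition_mem: "s \<le> d - s \<Longrightarrow> 1 \<le> d \<Longrightarrow> two_row_partition d s \<in> partitions_of d"
  by (auto simp: two_row_partition_def partitions_of_def is_partition_def)

lemma ssyt_content2_eq:
  assumes T: "T \<in> ssyt la (content2 p q)" and la: "is_partition la"
  shows "T = two_letter_tableau la p"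
proof -
  have letters: "T x = 1 \<or> T x = 2" if "x \<in> cells la" for x
  proof -
    have "{y \<in> cells la. T y = T x} \<noteq> {}" using that by blast
    then have "card {y \<in> cells la. T y = T x} > 0"
      by (simp only: card_gt_0_iff finite_cells_filter simp_thms)
    then show ?thesis using ssyt_content[OF T, of "T x"] by (auto simp: content2_def split: if_splits)
  qed
  have lower_rows: "T (r, c) = 2" if "(r, c) \<in> cells la" "r \<ge> 1" for r c
    using letters[OF that(1)] ssyt_row_index_less[OF T la that(1)] that(2) by auto
  have "{x \<in> cells la. T x \<le> 1} = Pair 0 ` {c. (0, c) \<in> cells la \<and> T (0, c) \<le> 1}"
  proof (rule set_eqI)
    fix x :: "nat \<times> nat"
    obtain r c where x: "x = (r, c)" by (cases x)
    show "x \<in> {x \<in> cells la. T x \<le> 1} \<longleftrightarrow> x \<in> Pair 0 ` {c. (0, c) \<in> cells la \<and> T (0, c) \<le> 1}"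
      using lower_rows[of r c] x by (cases r) auto
  qed
  then have "card {x \<in> cells la. T x \<le> 1} = row_le la T 1 0"
    unfolding row_le_def by (simp add: card_image inj_on_def)
  moreover have "card {x \<in> cells la. T x \<le> 1} = p"
    using ssyt_card_le[OF T, of 1] by (simp add: content2_def)
  ultimately have first_row: "T (0, c) \<le> 1 \<longleftrightarrow> c < p" if "(0, c) \<in> cells la" for c
    using ssyt_le_iff_row_le[OF T that] by simp
  show ?thesis
  proof
    fix x :: "nat \<times> nat"
    obtain r c where x: "x = (r, c)" by (cases x)
    show "T x = two_letter_tableau la p x"
    proof (cases "x \<in> cells la")
      case False
      then show ?thesis using T by (auto simp: ssyt_def two_letter_tableau_def x)
    next
      case True
      then show ?thesis
        using letters[OF True] lower_rows[of r c] first_row[of c]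
        by (cases r) (auto simp: x two_letter_tableau_def)
    qed
  qed
qed

lemma two_letter_tableau_ssyt:
  assumes "s \<le> r" "2 * r \<le> d"
  shows "two_letter_tableau (two_row_partition d s) (d - r)
    \<in> ssyt (two_row_partition d s) (content2 (d - r) r)"
proof -
  let ?la = "two_row_partition d s" and ?T = "two_letter_tableau (two_row_partition d s) (d - r)"
  have zero: "\<forall>p. p \<notin> cells ?la \<longrightarrow> ?T p = 0" and pos: "\<forall>p\<in>cells ?la. 1 \<le> ?T p"
    by (auto simp: two_letter_tableau_def)
  have rows: "\<forall>r' c. (r', Suc c) \<in> cells ?la \<longrightarrow> ?T (r', c) \<le> ?T (r', Suc c)"
    by (auto simp: two_letter_tableau_def mem_cells_two_row_partition)
  have cols: "\<forall>r' c. (Suc r', c) \<in> cells ?la \<longrightarrow> ?T (r', c) < ?T (Suc r', c)"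
    using assms by (auto simp: two_letter_tableau_def mem_cells_two_row_partition)
  have ones: "{x \<in> cells ?la. ?T x = 1} = Pair 0 ` {..<d - r}"
  proof (rule set_eqI)
    fix x :: "nat \<times> nat"
    obtain a b where x: "x = (a, b)" by (cases x)
    show "x \<in> {x \<in> cells ?la. ?T x = 1} \<longleftrightarrow> x \<in> Pair 0 ` {..<d - r}"
      unfolding x using assms by (auto simp: two_letter_tableau_def mem_cells_two_row_partition)
  qed
  have card_ones: "card {x \<in> cells ?la. ?T x = 1} = d - r"
    unfolding ones by (simp add: card_image inj_on_def)
  have split: "cells ?la = {x \<in> cells ?la. ?T x = 1} \<union> {x \<in> cells ?la. ?T x = 2}"
    by (auto simp: two_letter_tableau_def split: prod.splits)
  have "d = card (cells ?la)" using card_cells[of ?la] assms by (simp add: two_row_partition_def)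
  also have "card (cells ?la) = card {x \<in> cells ?la. ?T x = 1} + card {x \<in> cells ?la. ?T x = 2}"
    by (subst split, rule card_Un_disjoint) (auto simp: finite_cells_filter)
  finally have card_twos: "card {x \<in> cells ?la. ?T x = 2} = r" using card_ones assms by simp
  have "content2 (d - r) r v = card {x \<in> cells ?la. ?T x = v}" for v
  proof -
    consider "v = 1" | "v = 2" | "v \<noteq> 1" "v \<noteq> 2" by blast
    then show ?thesis
    proof cases
      case 3
      then have e: "{x \<in> cells ?la. ?T x = v} = {}"
        by (auto simp: two_letter_tableau_def split: prod.splits)
      show ?thesis unfolding e using 3 by (simp add: content2_def)
    qed (use card_ones card_twos in \<open>auto simp: content2_def\<close>)
  qed
  then show ?thesis unfolding ssyt_def using zero pos rows cols by blast
qed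

lemma schur_content2_nonzero_imp:
  assumes "schur nu (content2 (d - r) r) \<noteq> 0" "2 * r \<le> d" "nu \<in> partitions_of d" "1 \<le> d"
  shows "\<exists>s\<le>r. nu = two_row_partition d s"
proof -
  have nu: "is_partition nu" "sum_list nu = d" using assms(3) by (auto simp: partitions_of_def)
  then have "prefix_sum j [d - r, r] \<le> prefix_sum j nu" for j
    using schur_content_dominated[OF _ nu(1)] assms(1) by (simp add: partition_content_two)
  from this[of 1] this[of 2] have dom: "d - r \<le> prefix_sum 1 nu" "d \<le> prefix_sum 2 nu"
    using assms(2) by (simp_all add: prefix_sum_def)
  consider "nu = []" | x where "nu = [x]" | x y ys where "nu = x # y # ys"
    by (metis list.exhaust)
  then show ?thesis
  proof cases
    case 1
    then show ?thesis using nu assms(4) by simp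
  next
    case (2 x)
    then have "nu = two_row_partition d 0" using nu by (simp add: two_row_partition_def)
    then show ?thesis by blast
  next
    case (3 x y ys)
    have "0 < y" using nu 3 by (simp add: is_partition_def)
    show ?thesis
    proof (cases ys)
      case Nil
      then have "d - r \<le> x" "x + y = d" using dom nu 3 by (simp_all add: prefix_sum_def)
      then have "nu = two_row_partition d y" "y \<le> r"
        using 3 Nil \<open>0 < y\<close> assms(2) by (auto simp: two_row_partition_def)
      then show ?thesis by blast
    next
      case (Cons z zs)
      then have "0 < z" using nu 3 by (simp add: is_partition_def)
      then show ?thesis using dom nu 3 Cons by (simp add: prefix_sum_def)
    qed
  qed
qed

lemma schur_content2:
  assumes "2 * r \<le> d" "nu \<in> partitions_of d" "1 \<le> d"
  shows "schur nu (content2 (d - r) r) = (if \<exists>s\<le>r. nu = two_row_partition d s then 1 else 0)"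
proof (cases "\<exists>s\<le>r. nu = two_row_partition d s")
  case True
  then obtain s where s: "s \<le> r" "nu = two_row_partition d s" by blast
  have nu: "is_partition nu" using assms(2) by (simp add: partitions_of_def)
  have "ssyt nu (content2 (d - r) r) = {two_letter_tableau nu (d - r)}"
    using ssyt_content2_eq[OF _ nu] two_letter_tableau_ssyt[OF s(1) assms(1)] s(2) by blast
  then show ?thesis using True by (simp add: schur_def)
next
  case False
  then show ?thesis using schur_content2_nonzero_imp[OF _ assms] by auto
qed

definition monomial_exp :: "nat \<Rightarrow> (nat \<Rightarrow> nat) \<Rightarrow> bool" where
  "monomial_exp d a \<longleftrightarrow> a 0 = 0 \<and> finite {i. 0 < a i} \<and> sum a {i. 0 < a i} = d"

lemma schur_monomial_exp:
  assumes "schur la a \<noteq> 0"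
  shows "monomial_exp (sum_list la) a"
proof -
  from assms have "ssyt la a \<noteq> {}" by (auto simp: schur_def)
  then obtain T where T: "T \<in> ssyt la a" by blast
  have no_zero: "{p \<in> cells la. T p = 0} = {}" using ssyt_pos[OF T] by fastforce
  have a0: "a 0 = 0" unfolding ssyt_content[OF T, of 0] no_zero by simp
  have supp: "{i. 0 < a i} = T ` cells la"
  proof (rule set_eqI)
    fix i
    have "0 < a i \<longleftrightarrow> {p \<in> cells la. T p = i} \<noteq> {}"
      unfolding ssyt_content[OF T, of i] by (simp only: card_gt_0_iff finite_cells_filter simp_thms)
    then show "i \<in> {i. 0 < a i} \<longleftrightarrow> i \<in> T ` cells la" by auto
  qed
  have "sum a {i. 0 < a i} = (\<Sum>i\<in>T ` cells la. card {p \<in> cells la. T p = i})"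
    unfolding supp by (rule sum.cong[OF refl]) (rule ssyt_content[OF T])
  also have "\<dots> = card (cells la)"
    using sum.group[OF finite_cells finite_imageI[OF finite_cells] subset_refl, where g = T and h = "\<lambda>_. 1::nat"]
    by (simp only: card_eq_sum)
  finally show ?thesis unfolding monomial_exp_def using a0 supp finite_cells card_cells by simp
qed

section \<open>Schur expansions\<close>

lemma unitriangular_solvable:
  fixes K :: "'a \<Rightarrow> 'a \<Rightarrow> int" and rk :: "'a \<Rightarrow> nat"
  assumes "finite P" "\<forall>m\<in>P. K m m = 1"
    "\<forall>n\<in>P. \<forall>m\<in>P. K n m \<noteq> 0 \<longrightarrow> n \<noteq> m \<longrightarrow> rk m < rk n"
  shows "\<exists>c. (\<forall>x. x \<notin> P \<longrightarrow> c x = 0) \<and> (\<forall>m\<in>P. (\<Sum>n\<in>P. c n * K n m) = g m)"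
  using assms
proof (induction P arbitrary: g rule: finite_ranking_induct[where f = rk])
  case empty
  then show ?case by (intro exI[of _ "\<lambda>_. 0"]) simp
next
  case (insert x S)
  show ?case
  proof (cases "x \<in> S")
    case True
    then show ?thesis using insert by (simp add: insert_absorb)
  next
    case xS: False
    have K0: "K n x = 0" if "n \<in> S" for n
      using insert.prems(2) insert.hyps(2)[OF that] that xS by force
    obtain c' where c': "\<forall>y. y \<notin> S \<longrightarrow> c' y = 0"
      "\<forall>m\<in>S. (\<Sum>n\<in>S. c' n * K n m) = g m - g x * K x m"
      using insert.IH[of "\<lambda>m. g m - g x * K x m"] insert.prems by auto
    define c where "c = c'(x := g x)"
    have "(\<Sum>n\<in>S. c n * K n m) = (\<Sum>n\<in>S. c' n * K n m)" for m
      using xS by (intro sum.cong) (auto simp: c_def)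
    then have "(\<Sum>n\<in>insert x S. c n * K n m) = g x * K x m + (\<Sum>n\<in>S. c' n * K n m)" for m
      using insert.hyps(1) xS by (simp add: c_def)
    then have "\<forall>m\<in>insert x S. (\<Sum>n\<in>insert x S. c n * K n m) = g m"
      using c'(2) K0 insert.prems(1) by auto
    moreover have "\<forall>y. y \<notin> insert x S \<longrightarrow> c y = 0" using c'(1) by (simp add: c_def)
    ultimately show ?thesis by blast
  qed
qed

lemma unitriangular_unique:
  fixes K :: "'a \<Rightarrow> 'a \<Rightarrow> int" and rk :: "'a \<Rightarrow> nat"
  assumes "finite P" "\<forall>m\<in>P. K m m = 1"
    "\<forall>n\<in>P. \<forall>m\<in>P. K n m \<noteq> 0 \<longrightarrow> n \<noteq> m \<longrightarrow> rk m < rk n"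
    "\<forall>x. x \<notin> P \<longrightarrow> e x = 0" "\<forall>m\<in>P. (\<Sum>n\<in>P. e n * K n m) = 0"
  shows "e y = 0"
  using assms
proof (induction P arbitrary: e rule: finite_ranking_induct[where f = rk])
  case empty
  then show ?case by simp
next
  case (insert x S)
  show ?case
  proof (cases "x \<in> S")
    case True
    then show ?thesis using insert by (simp add: insert_absorb)
  next
    case xS: False
    have K0: "K n x = 0" if "n \<in> S" for n
      using insert.prems(2) insert.hyps(2)[OF that] that xS by force
    have "e x * K x x + (\<Sum>n\<in>S. e n * K n x) = 0"
      using insert.prems(4) insert.hyps(1) xS by simp
    then have ex: "e x = 0" using K0 insert.prems(1) by simp
    have "\<forall>m\<in>S. (\<Sum>n\<in>S. e n * K n m) = 0"
      using insert.prems(4) insert.hyps(1) xS ex by simp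
    moreover have "\<forall>z. z \<notin> S \<longrightarrow> e z = 0" using insert.prems(3) ex by auto
    ultimately show ?thesis using insert.IH[of e] insert.prems(1,2) by blast
  qed
qed

lemma length_le_sum_list_pos: "\<forall>x\<in>set xs. 0 < x \<Longrightarrow> length xs \<le> sum_list (xs :: nat list)"
  by (induction xs) auto

lemma finite_partitions_of: "finite (partitions_of d)"
proof -
  have "partitions_of d \<subseteq> {xs. set xs \<subseteq> {..d} \<and> length xs \<le> d}"
    by (auto simp: partitions_of_def is_partition_def intro: member_le_sum_list length_le_sum_list_pos)
  then show ?thesis by (rule finite_subset) (rule finite_lists_length_le, simp)
qed

lemma partitions_eqI_prefix_sum:
  assumes "nu \<in> partitions_of d" "mu \<in> partitions_of d" "\<forall>j\<le>d. prefix_sum j nu = prefix_sum j mu"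
  shows "nu = mu"
proof -
  have pos: "\<forall>x\<in>set nu. 0 < x" "\<forall>x\<in>set mu. 0 < x"
    and sums: "sum_list nu = d" "sum_list mu = d"
    using assms(1,2) by (auto simp: partitions_of_def is_partition_def)
  have len: "length nu \<le> d" "length mu \<le> d"
    using length_le_sum_list_pos[OF pos(1)] length_le_sum_list_pos[OF pos(2)] sums by simp_all
  have parts: "(if k < length nu then nu ! k else 0) = (if k < length mu then mu ! k else 0)"
    if "k < d" for k
    using assms(3) prefix_sum_Suc[of k nu] prefix_sum_Suc[of k mu] that by simp
  have nth_pos: "k < length nu \<Longrightarrow> 0 < nu ! k" "k < length mu \<Longrightarrow> 0 < mu ! k" for k
    using pos nth_mem by blast+
  have same_length: "length nu = length mu"
  proof (rule ccontr)
    assume "length nu \<noteq> length mu"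
    then consider "length nu < length mu" | "length mu < length nu" by linarith
    then show False
      by cases (use parts[of "length nu"] parts[of "length mu"] len nth_pos in \<open>fastforce+\<close>)
  qed
  show ?thesis
  proof (rule nth_equalityI[OF same_length])
    fix k assume "k < length nu"
    then show "nu ! k = mu ! k" using parts[of k] same_length len by simp
  qed
qed

definition dominance_rank :: "nat \<Rightarrow> nat list \<Rightarrow> nat" where
  "dominance_rank d nu = (\<Sum>j\<le>d. prefix_sum j nu)"

lemma kostka_unitriangular:
  shows "\<forall>m\<in>partitions_of d. schur m (partition_content m) = 1"
    and "\<forall>n\<in>partitions_of d. \<forall>m\<in>partitions_of d.
      schur n (partition_content m) \<noteq> 0 \<longrightarrow> n \<noteq> m \<longrightarrow> dominance_rank d m < dominance_rank d n"
proof -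
  show "\<forall>m\<in>partitions_of d. schur m (partition_content m) = 1"
    using schur_own_content by (auto simp: partitions_of_def)
  show "\<forall>n\<in>partitions_of d. \<forall>m\<in>partitions_of d.
      schur n (partition_content m) \<noteq> 0 \<longrightarrow> n \<noteq> m \<longrightarrow> dominance_rank d m < dominance_rank d n"
  proof (intro ballI impI)
    fix n m assume n: "n \<in> partitions_of d" and m: "m \<in> partitions_of d"
      and K: "schur n (partition_content m) \<noteq> 0" and "n \<noteq> m"
    have le: "prefix_sum j m \<le> prefix_sum j n" for j
      using schur_content_dominated[OF K] n by (simp add: partitions_of_def)
    then obtain j where "j \<le> d" "prefix_sum j m < prefix_sum j n"
      using partitions_eqI_prefix_sum[OF n m] \<open>n \<noteq> m\<close> le_neq_implies_less by metis
    then show "dominance_rank d m < dominance_rank d n"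
      unfolding dominance_rank_def by (intro sum_strict_mono_ex1) (use le in auto)
  qed
qed

lemma sorted_exp_eq_partition_content:
  fixes b :: "nat \<Rightarrow> nat"
  assumes b0: "b 0 = 0" and bN: "\<forall>i>N. b i = 0" and sN: "sum b {..N} = d"
    and sorted: "\<forall>i\<ge>1. b (Suc i) \<le> b i"
  shows "\<exists>mu\<in>partitions_of d. partition_content mu = b"
proof -
  have ex: "\<exists>k. b (Suc k) = 0" using bN by auto
  define L where "L = (LEAST k. b (Suc k) = 0)"
  have pos: "0 < b (Suc k)" if "k < L" for k
    using not_less_Least[of k "\<lambda>k. b (Suc k) = 0"] that unfolding L_def by simp
  have mono: "b (Suc k') \<le> b (Suc k)" if "k \<le> k'" for k k'
    using that
  proof (induction k' rule: dec_induct)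
    case (step m)
    then show ?case using sorted[rule_format, of "Suc m"] by simp
  qed simp
  have zero: "b (Suc k) = 0" if "L \<le> k" for k
    using mono[OF that] LeastI_ex[OF ex] unfolding L_def[symmetric] by simp
  have LN: "L \<le> N" unfolding L_def by (rule Least_le) (use bN in simp)
  define mu where "mu = map (\<lambda>k. b (Suc k)) [0..<L]"
  have "sum_list mu = (\<Sum>k<L. b (Suc k))"
    unfolding mu_def interv_sum_list_conv_sum_set_nat by (simp add: atLeast0LessThan)
  also have "\<dots> = (\<Sum>k<N. b (Suc k))"
    by (rule sum.mono_neutral_left) (use LN zero in auto)
  also have "\<dots> = sum b {..<Suc N}" unfolding sum.lessThan_Suc_shift using b0 by simp
  also have "\<dots> = d" using sN by (simp add: lessThan_Suc_atMost)
  finally have "sum_list mu = d" .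
  moreover have "partition_content mu = b"
  proof
    fix i show "partition_content mu i = b i"
      using b0 zero[of "i - 1"] by (cases i) (auto simp: partition_content_def mu_def)
  qed
  moreover have "is_partition mu"
    unfolding is_partition_def
  proof
    show "sorted_wrt (\<ge>) mu" unfolding sorted_wrt_iff_nth_less using mono by (auto simp: mu_def)
    show "\<forall>x\<in>set mu. 0 < x" using pos by (auto simp: mu_def)
  qed
  ultimately show ?thesis by (auto simp: partitions_of_def)
qed

lemma sum_comp_adj_transpose: "Suc i \<le> N \<Longrightarrow> (\<Sum>j\<le>N. h (adj_transpose i j)) = (\<Sum>j\<le>N. h j)"
  by (rule sum.reindex_bij_witness[of _ "adj_transpose i" "adj_transpose i"]) (auto simp: transpose_def)

text \<open>The termination measure for sorting an exponent vector by adjacent transpositions.\<close>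

lemma weighted_sum_adj_transpose_less:
  fixes b :: "nat \<Rightarrow> nat"
  assumes "b i < b (Suc i)" "Suc i \<le> N"
  shows "(\<Sum>j\<le>N. j * b (adj_transpose i j)) < (\<Sum>j\<le>N. j * b j)"
proof -
  let ?R = "{..N} - {i, Suc i}"
  have split: "(\<Sum>j\<le>N. h j) = (\<Sum>j\<in>?R. h j) + h i + h (Suc i)" for h :: "nat \<Rightarrow> nat"
  proof -
    have "{..N} = insert i (insert (Suc i) ?R)" using assms(2) by auto
    moreover have "(\<Sum>j\<in>insert i (insert (Suc i) ?R). h j) = h i + (h (Suc i) + (\<Sum>j\<in>?R. h j))"
      by (simp add: sum.insert_remove)
    ultimately show ?thesis by simp
  qed
  have "(\<Sum>j\<in>?R. j * b (adj_transpose i j)) = (\<Sum>j\<in>?R. j * b j)"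
    by (rule sum.cong) auto
  then show ?thesis
    using split[of "\<lambda>j. j * b (adj_transpose i j)"] split[of "\<lambda>j. j * b j"] assms(1) by simp
qed

lemma adj_transpose_invariant_vanishes_bounded:
  fixes G :: "(nat \<Rightarrow> nat) \<Rightarrow> int"
  assumes sym: "\<And>a i. 1 \<le> i \<Longrightarrow> G (a \<circ> adj_transpose i) = G a"
    and base: "\<And>mu. mu \<in> partitions_of d \<Longrightarrow> G (partition_content mu) = 0"
  shows "b 0 = 0 \<Longrightarrow> \<forall>i>N. b i = 0 \<Longrightarrow> sum b {..N} = d \<Longrightarrow> G b = 0"
proof (induction "\<Sum>j\<le>N. j * b j" arbitrary: b rule: less_induct)
  case less
  show ?case
  proof (cases "\<forall>i\<ge>1. b (Suc i) \<le> b i")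
    case True
    then show ?thesis using sorted_exp_eq_partition_content[OF less.prems] base by blast
  next
    case False
    then obtain i where i: "1 \<le> i" "b i < b (Suc i)" by (auto simp: not_le)
    have iN: "Suc i \<le> N"
    proof (rule ccontr)
      assume "\<not> Suc i \<le> N"
      then show False using less.prems(2) i(2) by simp
    qed
    let ?b = "b \<circ> adj_transpose i"
    have "?b 0 = 0" using less.prems(1) i(1) by (simp add: transpose_def)
    moreover have "\<forall>j>N. ?b j = 0" using less.prems(2) iN by (simp add: transpose_def)
    moreover have "sum ?b {..N} = d" using sum_comp_adj_transpose[OF iN, of b] less.prems(3) by simp
    moreover have "(\<Sum>j\<le>N. j * ?b j) < (\<Sum>j\<le>N. j * b j)"
      using weighted_sum_adj_transpose_less[OF i(2) iN] by simp
    ultimately have "G ?b = 0" using less.hyps by blast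
    then show ?thesis using sym[OF i(1), of b] by simp
  qed
qed

lemma adj_transpose_invariant_vanishes:
  fixes G :: "(nat \<Rightarrow> nat) \<Rightarrow> int"
  assumes sym: "\<And>a i. 1 \<le> i \<Longrightarrow> G (a \<circ> adj_transpose i) = G a"
    and base: "\<And>mu. mu \<in> partitions_of d \<Longrightarrow> G (partition_content mu) = 0"
    and a: "monomial_exp d a"
  shows "G a = 0"
proof -
  have fin: "finite {i. 0 < a i}" and sa: "sum a {i. 0 < a i} = d" and a0: "a 0 = 0"
    using a by (auto simp: monomial_exp_def)
  obtain N where N: "\<forall>i\<in>{i. 0 < a i}. i \<le> N" using fin finite_nat_set_iff_bounded_le by blast
  have aN: "\<forall>i>N. a i = 0"
  proof (intro allI impI)
    fix i assume "N < i"
    then show "a i = 0" using N by (metis gr0I mem_Collect_eq not_le)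
  qed
  have "sum a {i. 0 < a i} = sum a {..N}"
    by (rule sum.mono_neutral_left) (use N in auto)
  then show ?thesis using adj_transpose_invariant_vanishes_bounded[OF sym base a0 aN] sa by simp
qed

lemma schur_expansion_exists:
  fixes f :: "(nat \<Rightarrow> nat) \<Rightarrow> int"
  assumes sym: "\<And>a i. 1 \<le> i \<Longrightarrow> f (a \<circ> adj_transpose i) = f a"
    and supp: "\<And>a. \<not> monomial_exp d a \<Longrightarrow> f a = 0"
  shows "\<exists>c. (\<forall>mu. c mu \<noteq> 0 \<longrightarrow> mu \<in> partitions_of d)
    \<and> (\<forall>a. f a = (\<Sum>mu\<in>partitions_of d. c mu * schur mu a))"
proof -
  let ?P = "partitions_of d"
  obtain c where csupp: "\<forall>x. x \<notin> ?P \<longrightarrow> c x = 0"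
    and ceq: "\<forall>m\<in>?P. (\<Sum>n\<in>?P. c n * schur n (partition_content m)) = f (partition_content m)"
    using unitriangular_solvable[OF finite_partitions_of kostka_unitriangular[of d],
        where g = "\<lambda>m. f (partition_content m)"] by blast
  define h where "h a = (\<Sum>n\<in>?P. c n * schur n a)" for a
  have "f a - h a = 0" for a
  proof (cases "monomial_exp d a")
    case True
    show ?thesis
    proof (rule adj_transpose_invariant_vanishes[OF _ _ True])
      have "h (b \<circ> adj_transpose i) = h b" if "1 \<le> i" for b i
        unfolding h_def using schur_adj_transpose that by (simp add: partitions_of_def)
      then show "f (b \<circ> adj_transpose i) - h (b \<circ> adj_transpose i) = f b - h b" if "1 \<le> i" for b i
        using sym that by simp
      show "f (partition_content mu) - h (partition_content mu) = 0" if "mu \<in> ?P" for mu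
        using ceq that by (simp add: h_def)
    qed
  next
    case False
    have "schur n a = 0" if "n \<in> ?P" for n
      using schur_monomial_exp[of n a] that False by (auto simp: partitions_of_def)
    then show ?thesis using supp[OF False] by (simp add: h_def)
  qed
  then show ?thesis using csupp unfolding h_def by auto
qed

lemma schur_coeff_eqI:
  assumes "\<forall>mu. c mu \<noteq> 0 \<longrightarrow> mu \<in> partitions_of d"
    and "\<forall>a. f a = (\<Sum>mu\<in>partitions_of d. c mu * schur mu a)"
  shows "schur_coeff d f = c"
  unfolding schur_coeff_def
proof (rule the_equality)
  let ?P = "partitions_of d"
  show "(\<forall>mu. c mu \<noteq> 0 \<longrightarrow> mu \<in> ?P) \<and> (\<forall>a. f a = (\<Sum>mu\<in>?P. c mu * schur mu a))"
    using assms by blast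
  fix c' assume c': "(\<forall>mu. c' mu \<noteq> 0 \<longrightarrow> mu \<in> ?P) \<and> (\<forall>a. f a = (\<Sum>mu\<in>?P. c' mu * schur mu a))"
  have "c' y - c y = 0" for y
  proof (rule unitriangular_unique[OF finite_partitions_of kostka_unitriangular[of d]])
    show "\<forall>x. x \<notin> ?P \<longrightarrow> c' x - c x = 0"
    proof (intro allI impI)
      fix x assume "x \<notin> ?P"
      then have "c' x = 0" "c x = 0" using c' assms(1) by blast+
      then show "c' x - c x = 0" by simp
    qed
    have "(\<Sum>n\<in>?P. (c' n - c n) * schur n a) = (\<Sum>n\<in>?P. c' n * schur n a) - (\<Sum>n\<in>?P. c n * schur n a)" for a
      by (simp add: algebra_simps sum_subtractf)
    then show "\<forall>m\<in>?P. (\<Sum>n\<in>?P. (c' n - c n) * schur n (partition_content m)) = 0"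
      using c' assms(2) by simp
  qed
  then show "c' = c" by auto
qed

text \<open>Setting all variables but \<open>x\<^sub>1, x\<^sub>2\<close> to zero leaves only the two-row Schur functions.\<close>

lemma schur_expansion_content2:
  assumes "\<forall>a. f a = (\<Sum>mu\<in>partitions_of d. c mu * schur mu a)" "1 \<le> d" "2 * r \<le> d"
  shows "f (content2 (d - r) r) = (\<Sum>s\<le>r. c (two_row_partition d s))"
proof -
  let ?P = "partitions_of d"
  have "f (content2 (d - r) r) = (\<Sum>n\<in>?P. c n * schur n (content2 (d - r) r))"
    using assms(1) by blast
  also have "\<dots> = (\<Sum>n\<in>?P. if \<exists>s\<le>r. n = two_row_partition d s then c n else 0)"
    by (rule sum.cong[OF refl]) (auto simp: schur_content2[OF assms(3) _ assms(2)])
  also have "\<dots> = (\<Sum>n\<in>{n \<in> ?P. \<exists>s\<le>r. n = two_row_partition d s}. c n)"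
    by (rule sum.inter_filter[OF finite_partitions_of, symmetric])
  also have "{n \<in> ?P. \<exists>s\<le>r. n = two_row_partition d s} = two_row_partition d ` {..r}"
    using two_row_partition_mem[OF _ assms(2)] assms(3) by auto
  also have "(\<Sum>n\<in>two_row_partition d ` {..r}. c n) = (\<Sum>s\<le>r. c (two_row_partition d s))"
    by (subst sum.reindex) (auto simp: inj_on_def intro: two_row_partition_inj)
  finally show ?thesis .
qed

lemma two_row_coeff_eq_diff:
  assumes "\<forall>a. f a = (\<Sum>mu\<in>partitions_of d. c mu * schur mu a)" "1 \<le> d" "1 \<le> r" "2 * r \<le> d"
  shows "c (two_row_partition d r) = f (content2 (d - r) r) - f (content2 (d - r + 1) (r - 1))"
proof -
  note two_rows = schur_expansion_content2[OF assms(1,2)]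
  have "f (content2 (d - r) r) = (\<Sum>s\<le>r. c (two_row_partition d s))"
    using two_rows[of r] assms(4) by simp
  also have "\<dots> = (\<Sum>s\<le>r - 1. c (two_row_partition d s)) + c (two_row_partition d r)"
    using assms(3) by (cases r) (auto simp: atMost_Suc)
  also have "(\<Sum>s\<le>r - 1. c (two_row_partition d s)) = f (content2 (d - (r - 1)) (r - 1))"
    using two_rows[of "r - 1"] assms(4) by simp
  finally show ?thesis using assms(3,4) by (simp add: Suc_diff_le)
qed

theorem schur2_nonneg_criterion:
  fixes f :: "(nat \<Rightarrow> nat) \<Rightarrow> int"
  assumes d: "1 \<le> d"
    and supp: "\<And>a. \<not> monomial_exp d a \<Longrightarrow> f a = 0"
    and sym: "\<And>a i. 1 \<le> i \<Longrightarrow> f (a \<circ> adj_transpose i) = f a"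
    and nonneg: "0 \<le> f (content2 d 0)"
    and mono: "\<And>r. 1 \<le> r \<Longrightarrow> 2 * r \<le> d \<Longrightarrow> f (content2 (d - r + 1) (r - 1)) \<le> f (content2 (d - r) r)"
  shows "schur2_nonneg d f"
proof -
  obtain c where csupp: "\<forall>mu. c mu \<noteq> 0 \<longrightarrow> mu \<in> partitions_of d"
    and expansion: "\<forall>a. f a = (\<Sum>mu\<in>partitions_of d. c mu * schur mu a)"
    using schur_expansion_exists[OF sym supp] by blast
  have "0 \<le> c la" if la: "is_partition la" "length la \<le> 2" for la
  proof (cases "la \<in> partitions_of d")
    case False
    then have "c la = 0" using csupp by blast
    then show ?thesis by simp
  next
    case True
    then have sum_la: "sum_list la = d" by (simp add: partitions_of_def)
    consider "la = []" | x where "la = [x]" | x y where "la = [x, y]"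
      using la(2) by (cases la; cases "tl la"; auto)
    then show ?thesis
    proof cases
      case 1
      then show ?thesis using sum_la d by simp
    next
      case 2
      then have "la = two_row_partition d 0" using sum_la by (simp add: two_row_partition_def)
      then show ?thesis using schur_expansion_content2[OF expansion d, of 0] nonneg by simp
    next
      case (3 x y)
      have y: "1 \<le> y" "2 * y \<le> d" "la = two_row_partition d y"
        using la sum_la 3 by (auto simp: is_partition_def two_row_partition_def)
      then show ?thesis using two_row_coeff_eq_diff[OF expansion d y(1,2)] mono[OF y(1,2)] by simp
    qed
  qed
  then show ?thesis
    unfolding schur2_nonneg_def schur_coeff_eqI[OF csupp expansion] by blast
qed

section \<open>Colourings\<close>

definition colourings :: "'v set \<Rightarrow> ('v \<Rightarrow> 'v \<Rightarrow> bool) \<Rightarrow> ('v \<Rightarrow> nat) \<Rightarrow> (nat \<Rightarrow> nat) \<Rightarrow> ('v \<Rightarrow> nat set) set" where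
  "colourings V E \<alpha> a = {\<kappa> :: 'v \<Rightarrow> nat set.
      (\<forall>v. v \<notin> V \<longrightarrow> \<kappa> v = {}) \<and>
      (\<forall>v\<in>V. \<kappa> v \<subseteq> {1..} \<and> finite (\<kappa> v) \<and> card (\<kappa> v) = \<alpha> v) \<and>
      (\<forall>v\<in>V. \<forall>w\<in>V. E v w \<longrightarrow> \<kappa> v \<inter> \<kappa> w = {}) \<and>
      (\<forall>i. a i = card {v\<in>V. i \<in> \<kappa> v})}"

lemma Xcoef_eq_card_colourings: "Xcoef V E \<alpha> a = int (card (colourings V E \<alpha> a))"
  by (simp add: Xcoef_def colourings_def)

lemma colourings_monomial_exp:
  assumes "finite V" "\<kappa> \<in> colourings V E \<alpha> a"
  shows "monomial_exp (\<Sum>v\<in>V. \<alpha> v) a"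
proof -
  have \<kappa>: "\<forall>v\<in>V. \<kappa> v \<subseteq> {1..} \<and> finite (\<kappa> v) \<and> card (\<kappa> v) = \<alpha> v"
    and a: "\<forall>i. a i = card {v\<in>V. i \<in> \<kappa> v}" using assms(2) by (auto simp: colourings_def)
  define U where "U = (\<Union>v\<in>V. \<kappa> v)"
  have fin_U: "finite U" using assms(1) \<kappa> by (auto simp: U_def)
  have no_zero: "{v\<in>V. 0 \<in> \<kappa> v} = {}" using \<kappa> by fastforce
  have a0: "a 0 = 0" unfolding a[rule_format, of 0] no_zero by simp
  have supp: "{i. 0 < a i} \<subseteq> U"
  proof
    fix i assume "i \<in> {i. 0 < a i}"
    then have "{v\<in>V. i \<in> \<kappa> v} \<noteq> {}" using a by (metis card.empty less_irrefl mem_Collect_eq)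
    then show "i \<in> U" by (auto simp: U_def)
  qed
  have "sum a {i. 0 < a i} = sum a U"
    by (rule sum.mono_neutral_left[OF fin_U supp]) auto
  also have "\<dots> = (\<Sum>i\<in>U. \<Sum>v\<in>V. if i \<in> \<kappa> v then 1 else 0)"
    by (rule sum.cong[OF refl]) (simp add: a sum.If_cases assms(1) Collect_conj_eq Int_commute)
  also have "\<dots> = (\<Sum>v\<in>V. \<Sum>i\<in>U. if i \<in> \<kappa> v then 1 else 0)" by (rule sum.swap)
  also have "\<dots> = (\<Sum>v\<in>V. \<alpha> v)"
  proof (rule sum.cong[OF refl])
    fix v assume v: "v \<in> V"
    then have "U \<inter> \<kappa> v = \<kappa> v" by (auto simp: U_def)
    then show "(\<Sum>i\<in>U. if i \<in> \<kappa> v then 1 else 0) = \<alpha> v" using \<kappa> v fin_U by (simp add: sum.If_cases)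
  qed
  finally show ?thesis unfolding monomial_exp_def using a0 finite_subset[OF supp fin_U] by simp
qed

lemma Xcoef_eq_0_if_not_monomial_exp:
  assumes "finite V" "\<not> monomial_exp (\<Sum>v\<in>V. \<alpha> v) a"
  shows "Xcoef V E \<alpha> a = 0"
proof -
  have "colourings V E \<alpha> a = {}" using colourings_monomial_exp[OF assms(1)] assms(2) by blast
  then show ?thesis by (simp add: Xcoef_eq_card_colourings)
qed

lemma colourings_adj_transpose:
  assumes "\<kappa> \<in> colourings V E \<alpha> a" "1 \<le> i"
  shows "(\<lambda>v. adj_transpose i ` \<kappa> v) \<in> colourings V E \<alpha> (a \<circ> adj_transpose i)"
proof -
  have \<kappa>: "\<forall>v. v \<notin> V \<longrightarrow> \<kappa> v = {}"
    "\<forall>v\<in>V. \<kappa> v \<subseteq> {1..} \<and> finite (\<kappa> v) \<and> card (\<kappa> v) = \<alpha> v"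
    "\<forall>v\<in>V. \<forall>w\<in>V. E v w \<longrightarrow> \<kappa> v \<inter> \<kappa> w = {}"
    "\<forall>j. a j = card {v\<in>V. j \<in> \<kappa> v}" using assms(1) by (auto simp: colourings_def)
  have "adj_transpose i j \<in> {1..}" if "j \<in> {1..}" for j using that assms(2) by (auto simp: transpose_def)
  then have "\<forall>v\<in>V. adj_transpose i ` \<kappa> v \<subseteq> {1..} \<and> finite (adj_transpose i ` \<kappa> v)
      \<and> card (adj_transpose i ` \<kappa> v) = \<alpha> v"
    using \<kappa>(2) by (auto simp: card_image)
  moreover have "\<forall>v\<in>V. \<forall>w\<in>V. E v w \<longrightarrow> adj_transpose i ` \<kappa> v \<inter> adj_transpose i ` \<kappa> w = {}"
    using \<kappa>(3) by (simp add: image_Int[OF inj_transpose, symmetric])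
  moreover have "\<forall>j. (a \<circ> adj_transpose i) j = card {v\<in>V. j \<in> adj_transpose i ` \<kappa> v}"
    using \<kappa>(4) by (simp add: in_transpose_image_iff)
  ultimately show ?thesis using \<kappa>(1) by (simp add: colourings_def)
qed

lemma Xcoef_adj_transpose:
  assumes "1 \<le> i"
  shows "Xcoef V E \<alpha> (a \<circ> adj_transpose i) = Xcoef V E \<alpha> a"
proof -
  let ?f = "\<lambda>\<kappa> v. adj_transpose i ` \<kappa> v"
  have ff: "?f (?f \<kappa>) = \<kappa>" for \<kappa> :: "'a \<Rightarrow> nat set"
    by (simp add: image_image)
  have "a \<circ> adj_transpose i \<circ> adj_transpose i = a" by (simp add: comp_assoc)
  then have "?f ` colourings V E \<alpha> (a \<circ> adj_transpose i) \<subseteq> colourings V E \<alpha> a"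
    using colourings_adj_transpose[OF _ assms, of _ V E \<alpha> "a \<circ> adj_transpose i"] by auto
  then have "bij_betw ?f (colourings V E \<alpha> a) (colourings V E \<alpha> (a \<circ> adj_transpose i))"
    using colourings_adj_transpose[OF _ assms] ff by (intro bij_betw_byWitness[where f' = ?f]) auto
  then show ?thesis unfolding Xcoef_eq_card_colourings by (simp add: bij_betw_same_card)
qed

definition weight_set :: "'v set \<Rightarrow> ('v \<Rightarrow> nat) \<Rightarrow> nat \<Rightarrow> 'v set" where
  "weight_set V \<alpha> k = {v\<in>V. \<alpha> v = k}"

definition two_colouring :: "'v set \<Rightarrow> ('v \<Rightarrow> nat) \<Rightarrow> 'v set \<Rightarrow> 'v \<Rightarrow> nat set" where
  "two_colouring V \<alpha> S v = (if v \<in> V then (if \<alpha> v = 2 then {1, 2}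
     else if \<alpha> v = 1 then (if v \<in> S then {1} else {2}) else {}) else {})"

definition two_colour_compatible :: "('v \<Rightarrow> nat) \<Rightarrow> 'v set \<Rightarrow> 'v \<Rightarrow> 'v \<Rightarrow> bool" where
  "two_colour_compatible \<alpha> S v w \<longleftrightarrow>
     \<alpha> v = 0 \<or> \<alpha> w = 0 \<or> (\<alpha> v = 1 \<and> \<alpha> w = 1 \<and> (v \<in> S \<longleftrightarrow> w \<notin> S))"

definition proper_two_colouring :: "'v set \<Rightarrow> ('v \<Rightarrow> 'v \<Rightarrow> bool) \<Rightarrow> ('v \<Rightarrow> nat) \<Rightarrow> 'v set \<Rightarrow> bool" where
  "proper_two_colouring V E \<alpha> S \<longleftrightarrow> (\<forall>v\<in>V. \<forall>w\<in>V. E v w \<longrightarrow> two_colour_compatible \<alpha> S v w)"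

lemma two_colour_compatible_sym: "two_colour_compatible \<alpha> S v w = two_colour_compatible \<alpha> S w v"
  unfolding two_colour_compatible_def by auto

lemma two_colouring_disjoint_iff:
  assumes "v \<in> V" "w \<in> V" "\<alpha> v \<le> 2" "\<alpha> w \<le> 2"
  shows "two_colouring V \<alpha> S v \<inter> two_colouring V \<alpha> S w = {} \<longleftrightarrow> two_colour_compatible \<alpha> S v w"
proof -
  consider "\<alpha> v = 0" | "\<alpha> v = 1" | "\<alpha> v = 2" using assms(3) by force
  moreover consider "\<alpha> w = 0" | "\<alpha> w = 1" | "\<alpha> w = 2" using assms(4) by force
  ultimately show ?thesis
    using assms(1,2) by cases (cases, auto simp: two_colouring_def two_colour_compatible_def)+
qed

lemma colouring_content2_subset:
  assumes "finite V" "\<kappa> \<in> colourings V E \<alpha> (content2 p q)" "v \<in> V"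
  shows "\<kappa> v \<subseteq> {1, 2}"
proof
  fix j assume j: "j \<in> \<kappa> v"
  have "content2 p q j = card {w\<in>V. j \<in> \<kappa> w}" using assms(2) by (auto simp: colourings_def)
  moreover have "{w\<in>V. j \<in> \<kappa> w} \<noteq> {}" using j assms(3) by blast
  ultimately have "content2 p q j > 0" using assms(1) by (simp add: card_gt_0_iff)
  then show "j \<in> {1, 2}" by (auto simp: content2_def split: if_splits)
qed

lemma Xcoef_content2_eq_0_if_weight_ge3:
  assumes "finite V" "v \<in> V" "3 \<le> \<alpha> v"
  shows "Xcoef V E \<alpha> (content2 p q) = 0"
proof -
  have "\<kappa> \<notin> colourings V E \<alpha> (content2 p q)" for \<kappa>
  proof
    assume \<kappa>: "\<kappa> \<in> colourings V E \<alpha> (content2 p q)"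
    then have "card (\<kappa> v) \<le> card {1::nat, 2}"
      using colouring_content2_subset[OF assms(1) \<kappa> assms(2)] by (intro card_mono) auto
    moreover have "card (\<kappa> v) = \<alpha> v" using \<kappa> assms(2) by (auto simp: colourings_def)
    ultimately show False using assms(3) by simp
  qed
  then have "colourings V E \<alpha> (content2 p q) = {}" by blast
  then show ?thesis by (simp add: Xcoef_eq_card_colourings)
qed

lemma colouring_content2_eq_two_colouring:
  assumes fin: "finite V" and le2: "\<forall>v\<in>V. \<alpha> v \<le> 2" and \<kappa>: "\<kappa> \<in> colourings V E \<alpha> (content2 p q)"
  shows "\<kappa> = two_colouring V \<alpha> {v\<in>V. \<alpha> v = 1 \<and> \<kappa> v = {1}}"
proof
  fix v
  show "\<kappa> v = two_colouring V \<alpha> {v\<in>V. \<alpha> v = 1 \<and> \<kappa> v = {1}} v"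
  proof (cases "v \<in> V")
    case False
    then show ?thesis using \<kappa> by (simp add: colourings_def two_colouring_def)
  next
    case True
    have sub: "\<kappa> v \<subseteq> {1, 2}" by (rule colouring_content2_subset[OF fin \<kappa> True])
    have card: "card (\<kappa> v) = \<alpha> v" using \<kappa> True by (simp add: colourings_def)
    consider "\<alpha> v = 0" | "\<alpha> v = 1" | "\<alpha> v = 2" using le2 True by force
    then show ?thesis
    proof cases
      case 1
      then have "\<kappa> v = {}" using card sub by (metis card_0_eq finite.emptyI finite_insert finite_subset)
      then show ?thesis using 1 True by (simp add: two_colouring_def)
    next
      case 2
      then obtain x where x: "\<kappa> v = {x}" using card card_1_singletonE by metis
      then have "x = 1 \<or> x = 2" using sub by auto
      then show ?thesis using 2 True x by (auto simp: two_colouring_def)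
    next
      case 3
      then have "\<kappa> v = {1, 2}" using card sub by (intro card_subset_eq) auto
      then show ?thesis using 3 True by (simp add: two_colouring_def)
    qed
  qed
qed

lemma two_colouring_mem_colourings_iff:
  assumes fin: "finite V" and le2: "\<forall>v\<in>V. \<alpha> v \<le> 2" and S: "S \<subseteq> weight_set V \<alpha> 1"
  shows "two_colouring V \<alpha> S \<in> colourings V E \<alpha> (content2 p q) \<longleftrightarrow>
    card (weight_set V \<alpha> 2) + card S = p \<and>
    card (weight_set V \<alpha> 2) + card (weight_set V \<alpha> 1 - S) = q \<and> proper_two_colouring V E \<alpha> S"
proof -
  let ?\<kappa> = "two_colouring V \<alpha> S" and ?W = "weight_set V \<alpha>"
  have fin_W: "finite (?W k)" for k using fin by (simp add: weight_set_def)
  have "?W 2 \<inter> S = {}" using S by (auto simp: weight_set_def)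
  then have colour1: "card {v\<in>V. 1 \<in> ?\<kappa> v} = card (?W 2) + card S"
    using S fin_W finite_subset[OF S]
    by (subst card_Un_disjoint[symmetric])
      (auto intro!: arg_cong[where f = card] simp: two_colouring_def weight_set_def)
  have colour2: "card {v\<in>V. 2 \<in> ?\<kappa> v} = card (?W 2) + card (?W 1 - S)"
    using fin_W
    by (subst card_Un_disjoint[symmetric])
      (auto intro!: arg_cong[where f = card] simp: two_colouring_def weight_set_def)
  have other_colours: "card {v\<in>V. j \<in> ?\<kappa> v} = 0" if "j \<noteq> 1" "j \<noteq> 2" for j
  proof -
    have e: "{v\<in>V. j \<in> ?\<kappa> v} = {}" using that by (auto simp: two_colouring_def)
    show ?thesis unfolding e by simp
  qed
  have "(\<forall>j. content2 p q j = card {v\<in>V. j \<in> ?\<kappa> v}) \<longleftrightarrow>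
      card (?W 2) + card S = p \<and> card (?W 2) + card (?W 1 - S) = q"
    using colour1 colour2 other_colours by (auto simp: content2_def)
  moreover have "(\<forall>v\<in>V. \<forall>w\<in>V. E v w \<longrightarrow> ?\<kappa> v \<inter> ?\<kappa> w = {}) \<longleftrightarrow> proper_two_colouring V E \<alpha> S"
    using two_colouring_disjoint_iff le2 unfolding proper_two_colouring_def by metis
  moreover have "\<forall>v\<in>V. ?\<kappa> v \<subseteq> {1..} \<and> finite (?\<kappa> v) \<and> card (?\<kappa> v) = \<alpha> v"
    using le2 by (auto simp: two_colouring_def le_Suc_eq numeral_2_eq_2)
  ultimately show ?thesis by (auto simp: colourings_def two_colouring_def)
qed

lemma two_colouring_inj: "inj_on (two_colouring V \<alpha>) (Pow (weight_set V \<alpha> 1))"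
proof (rule inj_onI)
  fix S S' assume S: "S \<in> Pow (weight_set V \<alpha> 1)" "S' \<in> Pow (weight_set V \<alpha> 1)"
    and eq: "two_colouring V \<alpha> S = two_colouring V \<alpha> S'"
  show "S = S'"
  proof (rule set_eqI)
    fix v
    show "v \<in> S \<longleftrightarrow> v \<in> S'"
    proof (cases "v \<in> weight_set V \<alpha> 1")
      case True
      then have "two_colouring V \<alpha> S v = two_colouring V \<alpha> S' v" using eq by simp
      then show ?thesis using True by (auto simp: two_colouring_def weight_set_def split: if_splits)
    qed (use S in auto)
  qed
qed

lemma sum_weights_le2:
  assumes "finite V" "\<forall>v\<in>V. \<alpha> v \<le> 2"
  shows "(\<Sum>v\<in>V. \<alpha> v) = 2 * card (weight_set V \<alpha> 2) + card (weight_set V \<alpha> 1)"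
proof -
  have "(\<Sum>v\<in>V. \<alpha> v) = (\<Sum>v\<in>V. 2 * (if \<alpha> v = 2 then 1 else 0) + (if \<alpha> v = 1 then 1 else 0))"
    using assms(2) by (intro sum.cong) (auto simp: le_Suc_eq numeral_2_eq_2)
  also have "\<dots> = 2 * (\<Sum>v\<in>V. if \<alpha> v = 2 then 1 else 0) + (\<Sum>v\<in>V. if \<alpha> v = 1 then 1 else 0)"
    by (simp add: sum.distrib sum_distrib_left)
  also have "\<dots> = 2 * card (weight_set V \<alpha> 2) + card (weight_set V \<alpha> 1)"
    using assms(1) by (simp add: sum.If_cases weight_set_def Collect_conj_eq Int_commute)
  finally show ?thesis .
qed

text \<open>With weights at most 2, a colouring with colours 1, 2 only is determined by the set of
  weight-1 vertices coloured 1.\<close>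

lemma colourings_content2_eq_image:
  assumes fin: "finite V" and le2: "\<forall>v\<in>V. \<alpha> v \<le> 2"
  shows "colourings V E \<alpha> (content2 p q) = two_colouring V \<alpha> ` {S. S \<subseteq> weight_set V \<alpha> 1 \<and>
    card (weight_set V \<alpha> 2) + card S = p \<and> card (weight_set V \<alpha> 2) + card (weight_set V \<alpha> 1 - S) = q
    \<and> proper_two_colouring V E \<alpha> S}"
    (is "?L = two_colouring V \<alpha> ` ?R")
proof
  show "?L \<subseteq> two_colouring V \<alpha> ` ?R"
  proof
    fix \<kappa> assume \<kappa>: "\<kappa> \<in> ?L"
    define S where "S = {v\<in>V. \<alpha> v = 1 \<and> \<kappa> v = {1}}"
    have S: "S \<subseteq> weight_set V \<alpha> 1" by (auto simp: S_def weight_set_def)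
    have "\<kappa> = two_colouring V \<alpha> S"
      unfolding S_def by (rule colouring_content2_eq_two_colouring[OF fin le2 \<kappa>])
    then show "\<kappa> \<in> two_colouring V \<alpha> ` ?R"
      using \<kappa> S two_colouring_mem_colourings_iff[OF fin le2 S] by blast
  qed
  show "two_colouring V \<alpha> ` ?R \<subseteq> ?L"
    using two_colouring_mem_colourings_iff[OF fin le2] by blast
qed

lemma Xcoef_content2_eq_card_subsets:
  assumes fin: "finite V" and le2: "\<forall>v\<in>V. \<alpha> v \<le> 2" and pq: "p + q = (\<Sum>v\<in>V. \<alpha> v)"
  shows "Xcoef V E \<alpha> (content2 p q) = int (card {S. S \<subseteq> weight_set V \<alpha> 1 \<and>
    proper_two_colouring V E \<alpha> S \<and> int (card S) = int p - int (card (weight_set V \<alpha> 2))})"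
proof -
  let ?W = "weight_set V \<alpha>"
  have fin_W: "finite (?W 1)" using fin by (simp add: weight_set_def)
  have sizes: "p + q = 2 * card (?W 2) + card (?W 1)" using pq sum_weights_le2[OF fin le2] by simp
  have "{S. S \<subseteq> ?W 1 \<and> card (?W 2) + card S = p \<and> card (?W 2) + card (?W 1 - S) = q
        \<and> proper_two_colouring V E \<alpha> S}
      = {S. S \<subseteq> ?W 1 \<and> proper_two_colouring V E \<alpha> S \<and> int (card S) = int p - int (card (?W 2))}"
  proof (rule Collect_cong)
    fix S
    show "(S \<subseteq> ?W 1 \<and> card (?W 2) + card S = p \<and> card (?W 2) + card (?W 1 - S) = q
          \<and> proper_two_colouring V E \<alpha> S)
      \<longleftrightarrow> (S \<subseteq> ?W 1 \<and> proper_two_colouring V E \<alpha> S \<and> int (card S) = int p - int (card (?W 2)))"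
    proof (cases "S \<subseteq> ?W 1")
      case True
      have "card (?W 1 - S) = card (?W 1) - card S"
        using True fin_W by (simp add: card_Diff_subset finite_subset)
      moreover have "card S \<le> card (?W 1)" using True fin_W by (simp add: card_mono)
      ultimately show ?thesis using True sizes by auto
    qed auto
  qed
  moreover have "inj_on (two_colouring V \<alpha>) {S. S \<subseteq> ?W 1 \<and> card (?W 2) + card S = p
      \<and> card (?W 2) + card (?W 1 - S) = q \<and> proper_two_colouring V E \<alpha> S}"
    by (rule inj_on_subset[OF two_colouring_inj]) auto
  ultimately show ?thesis
    unfolding Xcoef_eq_card_colourings colourings_content2_eq_image[OF fin le2] by (simp add: card_image)
qed

section \<open>Symmetric unimodal sequences\<close>

definition binom_int :: "nat \<Rightarrow> int \<Rightarrow> int" where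
  "binom_int e t = (if t < 0 then 0 else int (e choose nat t))"

definition sym_unimodal :: "int \<Rightarrow> (int \<Rightarrow> int) \<Rightarrow> bool" where
  "sym_unimodal M b \<longleftrightarrow> (\<forall>t. b t = b (M - t)) \<and> (\<forall>t. 2 * (t + 1) \<le> M \<longrightarrow> b t \<le> b (t + 1))"

lemma binom_int_nonneg: "0 \<le> binom_int e t"
  by (simp add: binom_int_def)

lemma binom_int_0: "binom_int 0 t = (if t = 0 then 1 else 0)"
  by (auto simp: binom_int_def)

lemma binom_int_Suc: "binom_int (Suc e) t = binom_int e t + binom_int e (t - 1)"
proof (cases "t \<le> 0")
  case False
  then have "nat t = Suc (nat (t - 1))" "0 \<le> t - 1" by simp_all
  then show ?thesis using False by (simp add: binom_int_def)
qed (auto simp: binom_int_def)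

lemma card_subsets_card_eq_int:
  assumes "finite I"
  shows "int (card {J. J \<subseteq> I \<and> int (card J) = x}) = binom_int (card I) x"
proof (cases "x < 0")
  case True
  then have "{J. J \<subseteq> I \<and> int (card J) = x} = {}" by auto
  then show ?thesis using True by (simp add: binom_int_def)
next
  case False
  then have "{J. J \<subseteq> I \<and> int (card J) = x} = {J. J \<subseteq> I \<and> card J = nat x}" by auto
  then show ?thesis using False n_subsets[OF assms, of "nat x"] by (simp add: binom_int_def)
qed

lemma sym_unimodal_decreasing:
  assumes "sym_unimodal M b" "M \<le> 2 * t"
  shows "b (t + 1) \<le> b t"
proof -
  have sym: "\<forall>t. b t = b (M - t)" and up: "\<forall>t. 2 * (t + 1) \<le> M \<longrightarrow> b t \<le> b (t + 1)"
    using assms(1) by (auto simp: sym_unimodal_def)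
  have "2 * (M - t - 1 + 1) \<le> M" using assms(2) by simp
  then have "b (M - t - 1) \<le> b (M - t - 1 + 1)" using up by blast
  then show ?thesis using sym[rule_format, of "t + 1"] sym[rule_format, of t] by (simp add: algebra_simps)
qed

lemma sym_unimodal_scale: "sym_unimodal M b \<Longrightarrow> 0 \<le> c \<Longrightarrow> sym_unimodal M (\<lambda>t. c * b t)"
  unfolding sym_unimodal_def by (auto intro: mult_left_mono)

lemma sym_unimodal_pascal:
  assumes "sym_unimodal M b"
  shows "sym_unimodal (M + 1) (\<lambda>t. b t + b (t - 1))"
proof -
  have sym: "\<forall>t. b t = b (M - t)" and up: "\<forall>t. 2 * (t + 1) \<le> M \<longrightarrow> b t \<le> b (t + 1)"
    using assms by (auto simp: sym_unimodal_def)
  have "b t + b (t - 1) = b (M + 1 - t) + b (M + 1 - t - 1)" for t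
    using sym[rule_format, of t] sym[rule_format, of "t - 1"] by (simp add: algebra_simps)
  moreover have "b t + b (t - 1) \<le> b (t + 1) + b (t + 1 - 1)" if "2 * (t + 1) \<le> M + 1" for t
  proof -
    have "b (t - 1) \<le> b (t + 1)"
    proof (cases "2 * (t + 1) \<le> M")
      case True
      then show ?thesis using up[rule_format, of "t - 1"] up[rule_format, of t] by simp
    next
      case False
      then have "M = 2 * t + 1" using that by simp
      then show ?thesis using up[rule_format, of "t - 1"] sym[rule_format, of t] by simp
    qed
    then show ?thesis by simp
  qed
  ultimately show ?thesis unfolding sym_unimodal_def by blast
qed

lemma sym_unimodal_binom_int: "sym_unimodal (int e) (binom_int e)"
proof (induction e)
  case 0
  show ?case unfolding sym_unimodal_def binom_int_0 by auto
next
  case (Suc e)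
  have "(\<lambda>t. binom_int e t + binom_int e (t - 1)) = binom_int (Suc e)" by (auto simp: binom_int_Suc)
  then show ?case using sym_unimodal_pascal[OF Suc] by (simp add: add.commute)
qed

lemma sym_unimodal_binom_plus_ends:
  fixes N :: nat and c :: int
  assumes "1 \<le> N" "1 \<le> c"
  shows "sym_unimodal (int N) (\<lambda>t. c * binom_int N t + binom_int 0 t + binom_int 0 (t - int N))"
proof -
  have sym: "\<forall>t. binom_int N t = binom_int N (int N - t)"
    and up: "\<forall>t. 2 * (t + 1) \<le> int N \<longrightarrow> binom_int N t \<le> binom_int N (t + 1)"
    using sym_unimodal_binom_int[of N] by (auto simp: sym_unimodal_def)
  have "c * binom_int N t + binom_int 0 t + binom_int 0 (t - int N)
      = c * binom_int N (int N - t) + binom_int 0 (int N - t) + binom_int 0 (int N - t - int N)" for t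
    using sym[rule_format, of t] by (auto simp: binom_int_0)
  moreover have "c * binom_int N t + binom_int 0 t + binom_int 0 (t - int N)
      \<le> c * binom_int N (t + 1) + binom_int 0 (t + 1) + binom_int 0 (t + 1 - int N)"
    if t: "2 * (t + 1) \<le> int N" for t
  proof -
    consider "t < 0" | "t = 0" | "0 < t" by linarith
    then show ?thesis
    proof cases
      case 1
      then show ?thesis using binom_int_nonneg[of N "t + 1"] binom_int_nonneg[of 0] assms(2)
        by (simp add: binom_int_def)
    next
      case 2
      have "c * 2 \<le> c * int N" using t 2 assms(2) by (intro mult_left_mono) auto
      then have "c + 1 \<le> c * int N" using assms(2) by linarith
      then show ?thesis using 2 t by (simp add: binom_int_def)
    next
      case 3
      have "c * binom_int N t \<le> c * binom_int N (t + 1)" using up t assms(2) by (intro mult_left_mono) auto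
      then show ?thesis using 3 t by (simp add: binom_int_0)
    qed
  qed
  ultimately show ?thesis unfolding sym_unimodal_def by blast
qed

text \<open>The generating function \<open>c (1 + x)\<^bsup>N + e\<^esup> + (1 + x\<^bsup>N\<^esup>) (1 + x)\<^bsup>e\<^esup>\<close> has symmetric unimodal
  coefficients for \<open>c \<ge> 1\<close>: true for \<open>e = 0\<close>, and multiplying by \<open>1 + x\<close> preserves it.\<close>

lemma sym_unimodal_binom_shifted_sum:
  fixes N e :: nat and c :: int
  assumes "1 \<le> N" "1 \<le> c"
  shows "sym_unimodal (int (N + e))
    (\<lambda>t. c * binom_int (N + e) t + binom_int e t + binom_int e (t - int N))"
proof (induction e)
  case 0
  then show ?case using sym_unimodal_binom_plus_ends[OF assms] by simp
next
  case (Suc e)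
  have "(\<lambda>t. (c * binom_int (N + e) t + binom_int e t + binom_int e (t - int N)) +
      (c * binom_int (N + e) (t - 1) + binom_int e (t - 1) + binom_int e (t - 1 - int N)))
    = (\<lambda>t. c * binom_int (N + Suc e) t + binom_int (Suc e) t + binom_int (Suc e) (t - int N))"
    by (auto simp: binom_int_Suc algebra_simps)
  then show ?case using sym_unimodal_pascal[OF Suc] by (simp add: add.commute add.left_commute)
qed

lemma subsets_by_trace_eq_UN:
  assumes W: "finite W" "D \<subseteq> W" and Ch: "Ch \<subseteq> Pow D"
    and ok: "\<And>S. S \<subseteq> W \<Longrightarrow> ok S \<longleftrightarrow> S \<inter> D \<in> Ch"
  shows "{S. S \<subseteq> W \<and> ok S \<and> int (card S) = t}
    = (\<Union>Y\<in>Ch. (\<union>) Y ` {J. J \<subseteq> W - D \<and> int (card J) = t - int (card Y)})"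
    (is "?L = (\<Union>Y\<in>Ch. ?A Y)")
proof
  show "?L \<subseteq> (\<Union>Y\<in>Ch. ?A Y)"
  proof
    fix S assume "S \<in> ?L"
    then have S: "S \<subseteq> W" "ok S" "int (card S) = t" by auto
    have split: "S = (S \<inter> D) \<union> (S - D)" by auto
    have "card S = card (S \<inter> D) + card (S - D)"
      by (subst split, rule card_Un_disjoint) (use S(1) W(1) finite_subset in auto)
    then have "int (card (S - D)) = t - int (card (S \<inter> D))" using S(3) by simp
    then have "S \<in> ?A (S \<inter> D)" using split S(1) by blast
    then show "S \<in> (\<Union>Y\<in>Ch. ?A Y)" using ok[OF S(1)] S(2) by blast
  qed
  show "(\<Union>Y\<in>Ch. ?A Y) \<subseteq> ?L"
  proof
    fix S assume "S \<in> (\<Union>Y\<in>Ch. ?A Y)"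
    then obtain Y J where Y: "Y \<in> Ch" and J: "J \<subseteq> W - D" "int (card J) = t - int (card Y)"
      and S: "S = Y \<union> J" by blast
    have YD: "Y \<subseteq> D" using Y Ch by auto
    have SW: "S \<subseteq> W" using S YD J W(2) by auto
    have "S \<inter> D = Y" using S YD J by auto
    then have "ok S" using ok[OF SW] Y by simp
    have "finite Y" using finite_subset[OF YD] finite_subset[OF W(2) W(1)] by blast
    moreover have "finite J" using finite_subset[OF J(1)] W(1) by blast
    ultimately have "card S = card Y + card J"
      unfolding S using YD J by (intro card_Un_disjoint) auto
    then show "S \<in> ?L" using SW J \<open>ok S\<close> by simp
  qed
qed

lemma card_subsets_by_trace:
  assumes W: "finite W" "D \<subseteq> W" and Ch: "Ch \<subseteq> Pow D"
    and ok: "\<And>S. S \<subseteq> W \<Longrightarrow> ok S \<longleftrightarrow> S \<inter> D \<in> Ch"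
  shows "int (card {S. S \<subseteq> W \<and> ok S \<and> int (card S) = t})
    = (\<Sum>Y\<in>Ch. binom_int (card (W - D)) (t - int (card Y)))"
proof -
  let ?J = "\<lambda>Y. {J. J \<subseteq> W - D \<and> int (card J) = t - int (card Y)}"
  have fin_Ch: "finite Ch" using Ch W by (meson finite_Pow_iff finite_subset)
  have "inj_on ((\<union>) Y) (?J Y)" if "Y \<in> Ch" for Y
  proof (rule inj_onI)
    fix J J' assume "J \<in> ?J Y" "J' \<in> ?J Y" "Y \<union> J = Y \<union> J'"
    then show "J = J'" using that Ch by blast
  qed
  moreover have "(\<union>) Y ` ?J Y \<inter> (\<union>) Y' ` ?J Y' = {}" if "Y \<in> Ch" "Y' \<in> Ch" "Y \<noteq> Y'" for Y Y'
    using that Ch by blast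
  ultimately have "card (\<Union>Y\<in>Ch. (\<union>) Y ` ?J Y) = (\<Sum>Y\<in>Ch. card (?J Y))"
    using W(1) by (subst card_UN_disjoint[OF fin_Ch]) (auto simp: card_image)
  then have "int (card {S. S \<subseteq> W \<and> ok S \<and> int (card S) = t}) = (\<Sum>Y\<in>Ch. int (card (?J Y)))"
    using subsets_by_trace_eq_UN[OF assms] by simp
  then show ?thesis using card_subsets_card_eq_int[of "W - D"] W(1) by simp
qed

lemma sym_unimodal_content2_mono:
  fixes F :: "nat \<Rightarrow> nat \<Rightarrow> int"
  assumes h: "sym_unimodal M h" and d: "int d = 2 * c + M"
    and F: "\<And>p q. p + q = d \<Longrightarrow> F p q = h (int p - c)"
    and r: "1 \<le> r" "2 * r \<le> d"
  shows "F (d - r + 1) (r - 1) \<le> F (d - r) r"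
proof -
  let ?t = "int (d - r) - c"
  have "F (d - r + 1) (r - 1) = h (?t + 1)" using r by (subst F) (auto simp: algebra_simps)
  also have "\<dots> \<le> h ?t" by (rule sym_unimodal_decreasing[OF h]) (use r d in simp)
  also have "\<dots> = F (d - r) r" using r by (subst F) auto
  finally show ?thesis .
qed

lemma schur2_nonneg_Xcoef_sum:
  fixes V :: "'v set" and \<alpha> \<beta> :: "'v \<Rightarrow> nat"
  defines "d \<equiv> \<Sum>v\<in>V. \<alpha> v"
  assumes V: "finite V" and d: "1 \<le> d" and \<beta>: "(\<Sum>v\<in>V. \<beta> v) = d"
    and h: "sym_unimodal M h" "int d = 2 * c + M"
    and F: "\<And>p q. p + q = d \<Longrightarrow> Xcoef V E \<alpha> (content2 p q) + Xcoef V E \<beta> (content2 p q) = h (int p - c)"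
  shows "schur2_nonneg d (\<lambda>a. Xcoef V E \<alpha> a + Xcoef V E \<beta> a)"
proof (rule schur2_nonneg_criterion[OF d])
  show "Xcoef V E \<alpha> a + Xcoef V E \<beta> a = 0" if "\<not> monomial_exp d a" for a
    using that Xcoef_eq_0_if_not_monomial_exp[OF V] \<beta> unfolding d_def by simp
  show "Xcoef V E \<alpha> (a \<circ> adj_transpose i) + Xcoef V E \<beta> (a \<circ> adj_transpose i)
      = Xcoef V E \<alpha> a + Xcoef V E \<beta> a" if "1 \<le> i" for a i
    using that by (simp add: Xcoef_adj_transpose)
  show "0 \<le> Xcoef V E \<alpha> (content2 d 0) + Xcoef V E \<beta> (content2 d 0)"
    by (simp add: Xcoef_def)
  show "Xcoef V E \<alpha> (content2 (d - r + 1) (r - 1)) + Xcoef V E \<beta> (content2 (d - r + 1) (r - 1))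
      \<le> Xcoef V E \<alpha> (content2 (d - r) r) + Xcoef V E \<beta> (content2 (d - r) r)"
    if "1 \<le> r" "2 * r \<le> d" for r
    using sym_unimodal_content2_mono[OF h, where F = "\<lambda>p q. Xcoef V E \<alpha> (content2 p q)
      + Xcoef V E \<beta> (content2 p q)"] F that by blast
qed

section \<open>The spider\<close>

lemma svert_image_simps [simp]:
  "Mid i \<in> Mid ` A \<longleftrightarrow> i \<in> A" "End i \<in> End ` A \<longleftrightarrow> i \<in> A"
  "Mid i \<notin> End ` A" "End i \<notin> Mid ` A" "Torso \<notin> Mid ` A" "Torso \<notin> End ` A"
  "Ucap \<notin> Mid ` A" "Ucap \<notin> End ` A"
  by auto

lemma spider1_verts_eq: "spider1_verts n = {Torso, Ucap} \<union> Mid ` {1..n} \<union> End ` {1..n}"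
  by (auto simp: spider1_verts_def spider_verts_def)

lemma mem_spider1_verts [simp]:
  "Torso \<in> spider1_verts n" "Ucap \<in> spider1_verts n"
  "Mid i \<in> spider1_verts n \<longleftrightarrow> i \<in> {1..n}" "End i \<in> spider1_verts n \<longleftrightarrow> i \<in> {1..n}"
  by (auto simp: spider1_verts_eq)

lemma finite_spider1_verts: "finite (spider1_verts n)"
  by (simp add: spider1_verts_eq)

lemma spider1_adj_iff: "spider1_adj n v w \<longleftrightarrow>
    (\<exists>i\<in>{1..n}. (v = Torso \<and> w = Mid i) \<or> (v = Mid i \<and> w = Torso)
      \<or> (v = Mid i \<and> w = End i) \<or> (v = End i \<and> w = Mid i))
    \<or> (v = Torso \<and> w = Ucap) \<or> (v = Ucap \<and> w = Torso)"
  unfolding spider1_adj_def by (auto simp: doubleton_eq_iff)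

lemma proper_two_colouring_spider1_iff:
  "proper_two_colouring (spider1_verts n) (spider1_adj n) g S \<longleftrightarrow>
    (\<forall>i\<in>{1..n}. two_colour_compatible g S Torso (Mid i) \<and> two_colour_compatible g S (Mid i) (End i))
    \<and> two_colour_compatible g S Torso Ucap"
proof
  assume "proper_two_colouring (spider1_verts n) (spider1_adj n) g S"
  then have "\<And>v w. v \<in> spider1_verts n \<Longrightarrow> w \<in> spider1_verts n \<Longrightarrow> spider1_adj n v w
      \<Longrightarrow> two_colour_compatible g S v w"
    unfolding proper_two_colouring_def by blast
  then show "(\<forall>i\<in>{1..n}. two_colour_compatible g S Torso (Mid i)
      \<and> two_colour_compatible g S (Mid i) (End i))
    \<and> two_colour_compatible g S Torso Ucap"
    by (auto simp: spider1_adj_iff)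
next
  assume "(\<forall>i\<in>{1..n}. two_colour_compatible g S Torso (Mid i)
      \<and> two_colour_compatible g S (Mid i) (End i))
    \<and> two_colour_compatible g S Torso Ucap"
  note compat = this
  show "proper_two_colouring (spider1_verts n) (spider1_adj n) g S"
    unfolding proper_two_colouring_def
  proof (intro ballI impI)
    fix v w assume "spider1_adj n v w"
    then consider i where "i \<in> {1..n}" "v = Torso" "w = Mid i"
      | i where "i \<in> {1..n}" "v = Mid i" "w = Torso"
      | i where "i \<in> {1..n}" "v = Mid i" "w = End i" | i where "i \<in> {1..n}" "v = End i" "w = Mid i"
      | "v = Torso" "w = Ucap" | "v = Ucap" "w = Torso"
      unfolding spider1_adj_iff by blast
    then show "two_colour_compatible g S v w" by cases (metis compat two_colour_compatible_sym)+
  qed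
qed

text \<open>\<open>phi_leg \<alpha> i\<close> is \<open>\<phi>\<^sub>j(\<alpha>)\<close> when \<open>i\<close> is the \<open>j\<close>-th leg with weights \<open>(1, 0)\<close>.\<close>

definition phi_leg :: "(svert \<Rightarrow> nat) \<Rightarrow> nat \<Rightarrow> svert \<Rightarrow> nat" where
  "phi_leg \<alpha> i = \<alpha>(Mid i := 2, Torso := 0)"

definition full_legs :: "nat \<Rightarrow> (svert \<Rightarrow> nat) \<Rightarrow> nat set" where
  "full_legs n \<alpha> = {i\<in>{1..n}. \<alpha> (Mid i) = 1 \<and> \<alpha> (End i) = 1}"

definition end_legs :: "nat \<Rightarrow> (svert \<Rightarrow> nat) \<Rightarrow> nat set" where
  "end_legs n \<alpha> = {i\<in>{1..n}. \<alpha> (Mid i) = 0 \<and> \<alpha> (End i) = 1}"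

definition unit_cap :: "(svert \<Rightarrow> nat) \<Rightarrow> svert set" where
  "unit_cap \<alpha> = (if \<alpha> Ucap = 1 then {Ucap} else {})"

text \<open>The coefficients of \<open>x\<^sub>1\<^sup>p x\<^sub>2\<^sup>q\<close> in \<open>X\<^sup>\<alpha>\<close> and \<open>X\<^sup>\<beta>\<close> are binomial in \<open>p - spider_shift n \<alpha>\<close>.\<close>

definition spider_shift :: "nat \<Rightarrow> (svert \<Rightarrow> nat) \<Rightarrow> int" where
  "spider_shift n \<alpha> = int (card (weight_set (spider1_verts n) \<alpha> 2)) + 1 + int (card (full_legs n \<alpha>))"

text \<open>For \<open>\<alpha>\<close> the weight-1 vertices form the bipartite component \<open>torso_block\<close> of \<open>Torso\<close>,
  with colour classes \<open>torso_class\<close> and its complement, plus isolated ends of \<open>end_legs\<close>.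
  For \<open>phi_leg \<alpha> i\<close> they form the edges \<open>Mid j, End j\<close> of full legs plus isolated vertices.\<close>

definition torso_block :: "nat \<Rightarrow> (svert \<Rightarrow> nat) \<Rightarrow> svert set" where
  "torso_block n \<alpha> = insert Torso
     (unit_cap \<alpha> \<union> Mid ` (special_legs n \<alpha> \<union> full_legs n \<alpha>) \<union> End ` full_legs n \<alpha>)"

definition torso_class :: "nat \<Rightarrow> (svert \<Rightarrow> nat) \<Rightarrow> svert set" where
  "torso_class n \<alpha> = insert Torso (End ` full_legs n \<alpha>)"

definition full_leg_verts :: "nat \<Rightarrow> (svert \<Rightarrow> nat) \<Rightarrow> svert set" where
  "full_leg_verts n \<alpha> = Mid ` full_legs n \<alpha> \<union> End ` full_legs n \<alpha>"

definition full_leg_transversals :: "nat \<Rightarrow> (svert \<Rightarrow> nat) \<Rightarrow> svert set set" where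
  "full_leg_transversals n \<alpha> =
     {Y. Y \<subseteq> full_leg_verts n \<alpha> \<and> (\<forall>i\<in>full_legs n \<alpha>. Mid i \<in> Y \<longleftrightarrow> End i \<notin> Y)}"

definition phi_leg_isolated :: "nat \<Rightarrow> (svert \<Rightarrow> nat) \<Rightarrow> nat \<Rightarrow> svert set" where
  "phi_leg_isolated n \<alpha> i =
     unit_cap \<alpha> \<union> Mid ` (special_legs n \<alpha> - {i}) \<union> End ` end_legs n \<alpha>"

lemma finite_full_legs: "finite (full_legs n \<alpha>)"
  by (simp add: full_legs_def)

lemma card_full_leg_verts: "card (full_leg_verts n \<alpha>) = 2 * card (full_legs n \<alpha>)"
  unfolding full_leg_verts_def using finite_full_legs
  by (subst card_Un_disjoint) (auto simp: card_image inj_on_def)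

lemma full_leg_transversals_card:
  "card (full_leg_transversals n \<alpha>) = 2 ^ card (full_legs n \<alpha>)"
  "\<forall>Y\<in>full_leg_transversals n \<alpha>. card Y = card (full_legs n \<alpha>)"
proof -
  let ?P = "full_legs n \<alpha>"
  let ?f = "\<lambda>Z. Mid ` Z \<union> End ` (?P - Z)" and ?g = "\<lambda>Y. {i\<in>?P. Mid i \<in> Y}"
  have inv: "?f (?g Y) = Y" if "Y \<in> full_leg_transversals n \<alpha>" for Y
  proof (rule set_eqI)
    fix x show "x \<in> ?f (?g Y) \<longleftrightarrow> x \<in> Y"
      using that by (cases x) (auto simp: full_leg_transversals_def full_leg_verts_def)
  qed
  have "bij_betw ?f (Pow ?P) (full_leg_transversals n \<alpha>)"
    by (rule bij_betw_byWitness[where f' = ?g])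
      (use inv in \<open>auto simp: full_leg_transversals_def full_leg_verts_def\<close>)
  then show "card (full_leg_transversals n \<alpha>) = 2 ^ card ?P"
    using card_Pow[OF finite_full_legs] bij_betw_same_card by metis
  show "\<forall>Y\<in>full_leg_transversals n \<alpha>. card Y = card ?P"
  proof
    fix Y assume Y: "Y \<in> full_leg_transversals n \<alpha>"
    have "card (?f (?g Y)) = card (?g Y) + card (?P - ?g Y)"
      by (subst card_Un_disjoint) (auto simp: card_image inj_on_def finite_full_legs)
    also have "\<dots> = card ?P"
      using finite_full_legs card_mono[OF finite_full_legs, of "?g Y"] by (simp add: card_Diff_subset)
    finally show "card Y = card ?P" using inv[OF Y] by simp
  qed
qed

lemma finite_special_legs: "finite (special_legs n \<alpha>)"
  by (simp add: special_legs_def)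

lemma finite_end_legs: "finite (end_legs n \<alpha>)"
  by (simp add: end_legs_def)

context
  fixes n k :: nat and \<alpha> :: "svert \<Rightarrow> nat"
  assumes \<alpha>: "in_A n k \<alpha>"
begin

lemma weight_Torso: "\<alpha> Torso = 1"
  using \<alpha> by (simp add: in_A_def)

lemma weight_Mid_le: "i \<in> {1..n} \<Longrightarrow> \<alpha> (Mid i) \<le> 1"
  using \<alpha> by (simp add: in_A_def)

lemma weight_leg_le: "i \<in> {1..n} \<Longrightarrow> \<alpha> (Mid i) + \<alpha> (End i) \<le> 2"
  using \<alpha> by (simp add: in_A_def)

lemma card_special_legs: "card (special_legs n \<alpha>) = k"
  using \<alpha> by (simp add: in_A_def)

lemma weights_le2: "\<alpha> Ucap \<le> 2 \<Longrightarrow> \<forall>v\<in>spider1_verts n. \<alpha> v \<le> 2"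
  using weight_Torso weight_Mid_le weight_leg_le by (fastforce simp: spider1_verts_eq)

lemma weight1_eq: "weight_set (spider1_verts n) \<alpha> 1 = torso_block n \<alpha> \<union> End ` end_legs n \<alpha>"
proof (rule set_eqI)
  fix x show "x \<in> weight_set (spider1_verts n) \<alpha> 1 \<longleftrightarrow> x \<in> torso_block n \<alpha> \<union> End ` end_legs n \<alpha>"
  proof (cases x)
    case (Mid i)
    then show ?thesis using weight_Mid_le[of i] weight_leg_le[of i]
      by (auto simp: weight_set_def torso_block_def unit_cap_def special_legs_def full_legs_def
          end_legs_def)
  next
    case (End i)
    then show ?thesis using weight_Mid_le[of i] weight_leg_le[of i]
      by (auto simp: weight_set_def torso_block_def unit_cap_def special_legs_def full_legs_def
          end_legs_def)
  qed (auto simp: weight_set_def torso_block_def unit_cap_def weight_Torso)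
qed

lemma trace_torso_block_iff:
  "S \<inter> torso_block n \<alpha> \<in> {torso_class n \<alpha>, torso_block n \<alpha> - torso_class n \<alpha>} \<longleftrightarrow>
    (\<forall>i\<in>special_legs n \<alpha> \<union> full_legs n \<alpha>. Torso \<in> S \<longleftrightarrow> Mid i \<notin> S)
    \<and> (\<forall>i\<in>full_legs n \<alpha>. Mid i \<in> S \<longleftrightarrow> End i \<notin> S)
    \<and> (Ucap \<in> unit_cap \<alpha> \<longrightarrow> (Torso \<in> S \<longleftrightarrow> Ucap \<notin> S))"
proof -
  let ?D = "torso_block n \<alpha>" and ?X = "torso_class n \<alpha>"
  let ?M = "special_legs n \<alpha> \<union> full_legs n \<alpha>" and ?P = "full_legs n \<alpha>"
  have in_X: "S \<inter> ?D = ?X \<longleftrightarrow> Torso \<in> S \<and> (Ucap \<in> unit_cap \<alpha> \<longrightarrow> Ucap \<notin> S)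
      \<and> (\<forall>i\<in>?M. Mid i \<notin> S) \<and> (\<forall>i\<in>?P. End i \<in> S)"
  proof
    assume "S \<inter> ?D = ?X"
    then have "x \<in> S \<longleftrightarrow> x \<in> ?X" if "x \<in> ?D" for x using that by blast
    then show "Torso \<in> S \<and> (Ucap \<in> unit_cap \<alpha> \<longrightarrow> Ucap \<notin> S) \<and> (\<forall>i\<in>?M. Mid i \<notin> S) \<and> (\<forall>i\<in>?P. End i \<in> S)"
      by (auto simp: torso_block_def torso_class_def unit_cap_def)
  next
    assume a: "Torso \<in> S \<and> (Ucap \<in> unit_cap \<alpha> \<longrightarrow> Ucap \<notin> S) \<and> (\<forall>i\<in>?M. Mid i \<notin> S) \<and> (\<forall>i\<in>?P. End i \<in> S)"
    show "S \<inter> ?D = ?X"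
    proof (rule set_eqI)
      fix x show "x \<in> S \<inter> ?D \<longleftrightarrow> x \<in> ?X"
        using a by (cases x) (auto simp: torso_block_def torso_class_def unit_cap_def)
    qed
  qed
  have in_D_minus_X: "S \<inter> ?D = ?D - ?X \<longleftrightarrow> Torso \<notin> S \<and> (Ucap \<in> unit_cap \<alpha> \<longrightarrow> Ucap \<in> S)
      \<and> (\<forall>i\<in>?M. Mid i \<in> S) \<and> (\<forall>i\<in>?P. End i \<notin> S)"
  proof
    assume "S \<inter> ?D = ?D - ?X"
    then have "x \<in> S \<longleftrightarrow> x \<notin> ?X" if "x \<in> ?D" for x using that by blast
    then show "Torso \<notin> S \<and> (Ucap \<in> unit_cap \<alpha> \<longrightarrow> Ucap \<in> S) \<and> (\<forall>i\<in>?M. Mid i \<in> S) \<and> (\<forall>i\<in>?P. End i \<notin> S)"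
      by (auto simp: torso_block_def torso_class_def unit_cap_def)
  next
    assume a: "Torso \<notin> S \<and> (Ucap \<in> unit_cap \<alpha> \<longrightarrow> Ucap \<in> S) \<and> (\<forall>i\<in>?M. Mid i \<in> S) \<and> (\<forall>i\<in>?P. End i \<notin> S)"
    show "S \<inter> ?D = ?D - ?X"
    proof (rule set_eqI)
      fix x show "x \<in> S \<inter> ?D \<longleftrightarrow> x \<in> ?D - ?X"
        using a by (cases x) (auto simp: torso_block_def torso_class_def unit_cap_def)
    qed
  qed
  show ?thesis unfolding insert_iff singleton_iff in_X in_D_minus_X by blast
qed

lemma proper_two_colouring_alpha_iff:
  assumes "\<alpha> Ucap \<le> 1"
  shows "proper_two_colouring (spider1_verts n) (spider1_adj n) \<alpha> S \<longleftrightarrow>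
    S \<inter> torso_block n \<alpha> \<in> {torso_class n \<alpha>, torso_block n \<alpha> - torso_class n \<alpha>}"
proof -
  have leg: "two_colour_compatible \<alpha> S Torso (Mid i) \<and> two_colour_compatible \<alpha> S (Mid i) (End i) \<longleftrightarrow>
      (i \<in> special_legs n \<alpha> \<union> full_legs n \<alpha> \<longrightarrow> (Torso \<in> S \<longleftrightarrow> Mid i \<notin> S)) \<and>
      (i \<in> full_legs n \<alpha> \<longrightarrow> (Mid i \<in> S \<longleftrightarrow> End i \<notin> S))" if i: "i \<in> {1..n}" for i
  proof -
    have "\<alpha> (Mid i) = 0 \<or> \<alpha> (Mid i) = 1" using weight_Mid_le[OF i] by auto
    moreover have "\<alpha> (Mid i) = 1 \<longrightarrow> \<alpha> (End i) = 0 \<or> \<alpha> (End i) = 1" using weight_leg_le[OF i] by auto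
    ultimately show ?thesis using i weight_Torso
      by (auto simp: two_colour_compatible_def special_legs_def full_legs_def)
  qed
  have "two_colour_compatible \<alpha> S Torso Ucap \<longleftrightarrow> (Ucap \<in> unit_cap \<alpha> \<longrightarrow> (Torso \<in> S \<longleftrightarrow> Ucap \<notin> S))"
    using assms weight_Torso by (auto simp: two_colour_compatible_def unit_cap_def)
  then show ?thesis
    unfolding proper_two_colouring_spider1_iff trace_torso_block_iff
    using leg by (auto simp: special_legs_def full_legs_def)
qed

lemma card_torso_class: "card (torso_class n \<alpha>) = 1 + card (full_legs n \<alpha>)"
  unfolding torso_class_def using finite_full_legs by (simp add: card_image inj_on_def)

lemma card_torso_block_minus_class:
  assumes "\<alpha> Ucap \<le> 1"
  shows "card (torso_block n \<alpha> - torso_class n \<alpha>) = \<alpha> Ucap + k + card (full_legs n \<alpha>)"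
proof -
  have eq: "torso_block n \<alpha> - torso_class n \<alpha>
      = unit_cap \<alpha> \<union> (Mid ` special_legs n \<alpha> \<union> Mid ` full_legs n \<alpha>)"
    by (auto simp: torso_block_def torso_class_def unit_cap_def)
  have "Mid ` special_legs n \<alpha> \<inter> Mid ` full_legs n \<alpha> = {}"
    by (auto simp: special_legs_def full_legs_def)
  then have "card (Mid ` special_legs n \<alpha> \<union> Mid ` full_legs n \<alpha>) = k + card (full_legs n \<alpha>)"
    using finite_special_legs finite_full_legs card_special_legs
    by (subst card_Un_disjoint) (auto simp: card_image inj_on_def)
  moreover have "card (unit_cap \<alpha>) = \<alpha> Ucap" using assms by (auto simp: unit_cap_def)
  ultimately show ?thesis unfolding eq
    by (subst card_Un_disjoint) (auto simp: unit_cap_def finite_special_legs finite_full_legs)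
qed

lemma Xcoef_alpha_content2:
  assumes cap: "\<alpha> Ucap \<le> 1" and pq: "p + q = (\<Sum>v\<in>spider1_verts n. \<alpha> v)"
  shows "Xcoef (spider1_verts n) (spider1_adj n) \<alpha> (content2 p q) =
      binom_int (card (end_legs n \<alpha>)) (int p - spider_shift n \<alpha>)
    + binom_int (card (end_legs n \<alpha>)) (int p - spider_shift n \<alpha> - (int (\<alpha> Ucap) + int k - 1))"
proof -
  let ?V = "spider1_verts n" and ?W = "weight_set (spider1_verts n) \<alpha> 1"
  let ?D = "torso_block n \<alpha>" and ?X = "torso_class n \<alpha>"
  have fin_W: "finite ?W" using finite_spider1_verts by (simp add: weight_set_def)
  have "Xcoef ?V (spider1_adj n) \<alpha> (content2 p q) = int (card {S. S \<subseteq> ?W \<and>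
      proper_two_colouring ?V (spider1_adj n) \<alpha> S \<and> int (card S) = int p - int (card (weight_set ?V \<alpha> 2))})"
    using Xcoef_content2_eq_card_subsets[OF finite_spider1_verts weights_le2 pq] cap by simp
  also have "\<dots> = (\<Sum>Y\<in>{?X, ?D - ?X}.
      binom_int (card (?W - ?D)) (int p - int (card (weight_set ?V \<alpha> 2)) - int (card Y)))"
    using proper_two_colouring_alpha_iff[OF cap] weight1_eq
    by (intro card_subsets_by_trace[OF fin_W]) (auto simp: torso_class_def torso_block_def)
  also have "?W - ?D = End ` end_legs n \<alpha>"
    unfolding weight1_eq by (auto simp: torso_block_def end_legs_def full_legs_def unit_cap_def)
  finally have "Xcoef ?V (spider1_adj n) \<alpha> (content2 p q) = (\<Sum>Y\<in>{?X, ?D - ?X}.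
      binom_int (card (End ` end_legs n \<alpha>)) (int p - int (card (weight_set ?V \<alpha> 2)) - int (card Y)))" .
  moreover have "?X \<noteq> ?D - ?X" by (auto simp: torso_class_def)
  ultimately show ?thesis
    using card_torso_class card_torso_block_minus_class[OF cap]
    by (simp add: card_image inj_on_def spider_shift_def algebra_simps)
qed

lemma Xcoef_alpha_content2_cap2:
  assumes cap: "\<alpha> Ucap = 2" and pq: "p + q = (\<Sum>v\<in>spider1_verts n. \<alpha> v)"
  shows "Xcoef (spider1_verts n) (spider1_adj n) \<alpha> (content2 p q) = 0"
proof -
  have "\<not> proper_two_colouring (spider1_verts n) (spider1_adj n) \<alpha> S" for S
    unfolding proper_two_colouring_spider1_iff two_colour_compatible_def using cap weight_Torso by simp
  then show ?thesis
    using Xcoef_content2_eq_card_subsets[OF finite_spider1_verts weights_le2 pq] cap by simp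
qed

end

context
  fixes n k :: nat and \<alpha> :: "svert \<Rightarrow> nat" and i :: nat
  assumes \<alpha>: "in_A n k \<alpha>" and i: "i \<in> special_legs n \<alpha>"
begin

lemma special_leg_i: "i \<in> {1..n}" "\<alpha> (Mid i) = 1" "\<alpha> (End i) = 0"
  using i by (auto simp: special_legs_def)

lemma phi_leg_weights_le2: "\<alpha> Ucap \<le> 2 \<Longrightarrow> \<forall>v\<in>spider1_verts n. phi_leg \<alpha> i v \<le> 2"
  using weights_le2[OF \<alpha>] by (auto simp: phi_leg_def)

lemma phi_leg_weight1_eq:
  "weight_set (spider1_verts n) (phi_leg \<alpha> i) 1 = full_leg_verts n \<alpha> \<union> phi_leg_isolated n \<alpha> i"
proof (rule set_eqI)
  fix x
  show "x \<in> weight_set (spider1_verts n) (phi_leg \<alpha> i) 1 \<longleftrightarrow> x \<in> full_leg_verts n \<alpha> \<union> phi_leg_isolated n \<alpha> i"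
  proof (cases x)
    case (Mid j)
    then show ?thesis using weight_Mid_le[OF \<alpha>, of j] weight_leg_le[OF \<alpha>, of j] special_leg_i
      by (auto simp: weight_set_def full_leg_verts_def phi_leg_isolated_def phi_leg_def
          special_legs_def full_legs_def end_legs_def unit_cap_def)
  next
    case (End j)
    then show ?thesis using weight_Mid_le[OF \<alpha>, of j] weight_leg_le[OF \<alpha>, of j]
      by (auto simp: weight_set_def full_leg_verts_def phi_leg_isolated_def phi_leg_def
          special_legs_def full_legs_def end_legs_def unit_cap_def)
  qed (auto simp: weight_set_def full_leg_verts_def phi_leg_isolated_def unit_cap_def phi_leg_def)
qed

lemma phi_leg_weight1_minus_full_leg_verts:
  "weight_set (spider1_verts n) (phi_leg \<alpha> i) 1 - full_leg_verts n \<alpha> = phi_leg_isolated n \<alpha> i"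
  unfolding phi_leg_weight1_eq
  by (auto simp: full_leg_verts_def phi_leg_isolated_def unit_cap_def special_legs_def full_legs_def
      end_legs_def)

lemma phi_leg_weight2_eq:
  "weight_set (spider1_verts n) (phi_leg \<alpha> i) 2 = insert (Mid i) (weight_set (spider1_verts n) \<alpha> 2)"
  using special_leg_i by (auto simp: weight_set_def phi_leg_def weight_Torso[OF \<alpha>])

lemma card_phi_leg_weight2:
  "card (weight_set (spider1_verts n) (phi_leg \<alpha> i) 2) = card (weight_set (spider1_verts n) \<alpha> 2) + 1"
  unfolding phi_leg_weight2_eq using special_leg_i finite_spider1_verts by (simp add: weight_set_def)

lemma card_phi_leg_isolated:
  "card (phi_leg_isolated n \<alpha> i) = card (unit_cap \<alpha>) + (k - 1) + card (end_legs n \<alpha>)"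
proof -
  have "card (Mid ` (special_legs n \<alpha> - {i})) = k - 1"
    using card_special_legs[OF \<alpha>] i finite_special_legs by (simp add: card_image inj_on_def)
  moreover have "card (End ` end_legs n \<alpha>) = card (end_legs n \<alpha>)" by (simp add: card_image inj_on_def)
  moreover have "card (unit_cap \<alpha> \<union> Mid ` (special_legs n \<alpha> - {i}))
      = card (unit_cap \<alpha>) + card (Mid ` (special_legs n \<alpha> - {i}))"
    by (rule card_Un_disjoint) (auto simp: unit_cap_def finite_special_legs)
  moreover have "card (unit_cap \<alpha> \<union> Mid ` (special_legs n \<alpha> - {i}) \<union> End ` end_legs n \<alpha>) =
      card (unit_cap \<alpha> \<union> Mid ` (special_legs n \<alpha> - {i})) + card (End ` end_legs n \<alpha>)"
    by (rule card_Un_disjoint) (auto simp: unit_cap_def finite_special_legs finite_end_legs)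
  ultimately show ?thesis unfolding phi_leg_isolated_def by simp
qed

lemma proper_two_colouring_phi_leg_iff:
  "proper_two_colouring (spider1_verts n) (spider1_adj n) (phi_leg \<alpha> i) S \<longleftrightarrow>
    S \<inter> full_leg_verts n \<alpha> \<in> full_leg_transversals n \<alpha>"
proof -
  let ?\<beta> = "phi_leg \<alpha> i"
  have leg: "two_colour_compatible ?\<beta> S Torso (Mid j) \<and> two_colour_compatible ?\<beta> S (Mid j) (End j) \<longleftrightarrow>
      (j \<in> full_legs n \<alpha> \<longrightarrow> (Mid j \<in> S \<longleftrightarrow> End j \<notin> S))" if j: "j \<in> {1..n}" for j
  proof (cases "j = i")
    case True
    then show ?thesis using special_leg_i by (auto simp: two_colour_compatible_def phi_leg_def full_legs_def)
  next
    case False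
    have "\<alpha> (Mid j) = 0 \<or> \<alpha> (Mid j) = 1" using weight_Mid_le[OF \<alpha> j] by auto
    moreover have "\<alpha> (Mid j) = 1 \<longrightarrow> \<alpha> (End j) = 0 \<or> \<alpha> (End j) = 1" using weight_leg_le[OF \<alpha> j] by auto
    ultimately show ?thesis using False j by (auto simp: two_colour_compatible_def phi_leg_def full_legs_def)
  qed
  have "two_colour_compatible ?\<beta> S Torso Ucap" by (simp add: two_colour_compatible_def phi_leg_def)
  then have "proper_two_colouring (spider1_verts n) (spider1_adj n) ?\<beta> S \<longleftrightarrow>
      (\<forall>j\<in>full_legs n \<alpha>. Mid j \<in> S \<longleftrightarrow> End j \<notin> S)"
    unfolding proper_two_colouring_spider1_iff using leg by (auto simp: full_legs_def)
  also have "\<dots> \<longleftrightarrow> S \<inter> full_leg_verts n \<alpha> \<in> full_leg_transversals n \<alpha>"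
    by (auto simp: full_leg_transversals_def full_leg_verts_def)
  finally show ?thesis .
qed

lemma sum_phi_leg: "(\<Sum>v\<in>spider1_verts n. phi_leg \<alpha> i v) = (\<Sum>v\<in>spider1_verts n. \<alpha> v)"
proof -
  let ?V = "spider1_verts n" and ?R = "spider1_verts n - {Torso, Mid i}"
  have split: "(\<Sum>v\<in>?V. g v) = g Torso + g (Mid i) + (\<Sum>v\<in>?R. g v)" for g :: "svert \<Rightarrow> nat"
    using special_leg_i finite_spider1_verts
    by (simp add: sum.remove[of _ Torso] sum.remove[of _ "Mid i"] insert_Diff_if Diff_insert2[symmetric])
  have "(\<Sum>v\<in>?R. phi_leg \<alpha> i v) = (\<Sum>v\<in>?R. \<alpha> v)"
    by (rule sum.cong) (auto simp: phi_leg_def)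
  then show ?thesis
    using split[of "phi_leg \<alpha> i"] split[of \<alpha>] special_leg_i weight_Torso[OF \<alpha>] by (simp add: phi_leg_def)
qed

lemma Xcoef_phi_leg_content2:
  assumes cap: "\<alpha> Ucap \<le> 2" and pq: "p + q = (\<Sum>v\<in>spider1_verts n. \<alpha> v)"
  shows "Xcoef (spider1_verts n) (spider1_adj n) (phi_leg \<alpha> i) (content2 p q) =
    2 ^ card (full_legs n \<alpha>) * binom_int (card (unit_cap \<alpha>) + (k - 1) + card (end_legs n \<alpha>))
      (int p - spider_shift n \<alpha>)"
proof -
  let ?V = "spider1_verts n" and ?\<beta> = "phi_leg \<alpha> i"
  let ?W = "weight_set ?V ?\<beta> 1" and ?D = "full_leg_verts n \<alpha>"
  have fin_W: "finite ?W" using finite_spider1_verts by (simp add: weight_set_def)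
  have "Xcoef ?V (spider1_adj n) ?\<beta> (content2 p q) = int (card {S. S \<subseteq> ?W \<and>
      proper_two_colouring ?V (spider1_adj n) ?\<beta> S \<and> int (card S) = int p - int (card (weight_set ?V ?\<beta> 2))})"
    using Xcoef_content2_eq_card_subsets[OF finite_spider1_verts phi_leg_weights_le2[OF cap]] pq sum_phi_leg
    by simp
  also have "\<dots> = (\<Sum>Y\<in>full_leg_transversals n \<alpha>.
      binom_int (card (?W - ?D)) (int p - int (card (weight_set ?V ?\<beta> 2)) - int (card Y)))"
    using proper_two_colouring_phi_leg_iff phi_leg_weight1_eq
    by (intro card_subsets_by_trace[OF fin_W]) (auto simp: full_leg_transversals_def)
  also have "\<dots> = 2 ^ card (full_legs n \<alpha>) * binom_int (card (phi_leg_isolated n \<alpha> i))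
      (int p - int (card (weight_set ?V ?\<beta> 2)) - int (card (full_legs n \<alpha>)))"
    unfolding phi_leg_weight1_minus_full_leg_verts using full_leg_transversals_card by simp
  finally show ?thesis
    unfolding card_phi_leg_isolated card_phi_leg_weight2 by (simp add: spider_shift_def algebra_simps)
qed

end

lemma spider1_degree_eq:
  assumes \<alpha>: "in_A n k \<alpha>" and i: "i \<in> special_legs n \<alpha>" and cap: "\<alpha> Ucap \<le> 2"
  shows "int (\<Sum>v\<in>spider1_verts n. \<alpha> v)
    = 2 * spider_shift n \<alpha> + int (card (unit_cap \<alpha>) + (k - 1) + card (end_legs n \<alpha>))"
proof -
  let ?V = "spider1_verts n" and ?\<beta> = "phi_leg \<alpha> i"
  have fin: "finite (full_leg_verts n \<alpha>)" "finite (phi_leg_isolated n \<alpha> i)"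
    using finite_spider1_verts phi_leg_weight1_eq[OF \<alpha> i]
    by (metis finite_Un finite_subset weight_set_def mem_Collect_eq subsetI)+
  have "full_leg_verts n \<alpha> \<inter> phi_leg_isolated n \<alpha> i = {}"
    using phi_leg_weight1_minus_full_leg_verts[OF \<alpha> i] by blast
  then have "card (weight_set ?V ?\<beta> 1) = 2 * card (full_legs n \<alpha>) + card (phi_leg_isolated n \<alpha> i)"
    unfolding phi_leg_weight1_eq[OF \<alpha> i] by (simp add: card_Un_disjoint[OF fin] card_full_leg_verts)
  then show ?thesis
    using sum_weights_le2[OF finite_spider1_verts phi_leg_weights_le2[OF \<alpha> i cap]]
      sum_phi_leg[OF \<alpha> i] card_phi_leg_weight2[OF \<alpha> i] card_phi_leg_isolated[OF \<alpha> i]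
    by (simp add: spider_shift_def)
qed

lemma spider1_content2_sym_unimodal_cap_le2:
  assumes \<alpha>: "in_A n k \<alpha>" and k: "2 \<le> k" and i: "i \<in> special_legs n \<alpha>" and cap: "\<alpha> Ucap \<le> 2"
  shows "\<exists>M h. sym_unimodal M h \<and> int (\<Sum>v\<in>spider1_verts n. \<alpha> v) = 2 * spider_shift n \<alpha> + M \<and>
    (\<forall>p q. p + q = (\<Sum>v\<in>spider1_verts n. \<alpha> v) \<longrightarrow>
       Xcoef (spider1_verts n) (spider1_adj n) \<alpha> (content2 p q)
         + Xcoef (spider1_verts n) (spider1_adj n) (phi_leg \<alpha> i) (content2 p q)
       = h (int p - spider_shift n \<alpha>))"
proof -
  let ?V = "spider1_verts n" and ?E = "spider1_adj n" and ?c = "spider_shift n \<alpha>"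
  define P where "P = card (full_legs n \<alpha>)"
  define e where "e = card (end_legs n \<alpha>)"
  define N where "N = card (unit_cap \<alpha>) + (k - 1)"
  note d = spider1_degree_eq[OF \<alpha> i cap, folded N_def e_def]
  note \<beta> = Xcoef_phi_leg_content2[OF \<alpha> i cap, folded P_def N_def e_def]
  show ?thesis
  proof (cases "\<alpha> Ucap = 2")
    case True
    show ?thesis
    proof (intro exI conjI allI impI)
      show "sym_unimodal (int (N + e)) (\<lambda>t. 2 ^ P * binom_int (N + e) t)"
        by (rule sym_unimodal_scale[OF sym_unimodal_binom_int]) simp
      show "int (\<Sum>v\<in>?V. \<alpha> v) = 2 * ?c + int (N + e)" by (rule d)
      fix p q assume "p + q = (\<Sum>v\<in>?V. \<alpha> v)"
      then show "Xcoef ?V ?E \<alpha> (content2 p q) + Xcoef ?V ?E (phi_leg \<alpha> i) (content2 p q)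
          = 2 ^ P * binom_int (N + e) (int p - ?c)"
        using \<beta> Xcoef_alpha_content2_cap2[OF \<alpha> True] by simp
    qed
  next
    case False
    then have N: "N = \<alpha> Ucap + k - 1" "1 \<le> N" using cap k by (auto simp: unit_cap_def N_def)
    show ?thesis
    proof (intro exI conjI allI impI)
      show "sym_unimodal (int (N + e))
          (\<lambda>t. 2 ^ P * binom_int (N + e) t + binom_int e t + binom_int e (t - int N))"
        using N(2) by (intro sym_unimodal_binom_shifted_sum) auto
      show "int (\<Sum>v\<in>?V. \<alpha> v) = 2 * ?c + int (N + e)" by (rule d)
      fix p q assume pq: "p + q = (\<Sum>v\<in>?V. \<alpha> v)"
      then show "Xcoef ?V ?E \<alpha> (content2 p q) + Xcoef ?V ?E (phi_leg \<alpha> i) (content2 p q)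
          = 2 ^ P * binom_int (N + e) (int p - ?c) + binom_int e (int p - ?c)
            + binom_int e (int p - ?c - int N)"
        using \<beta> Xcoef_alpha_content2[OF \<alpha> _ pq] False cap N(1) k
        by (simp add: e_def of_nat_diff algebra_simps)
    qed
  qed
qed

lemma spider1_content2_sym_unimodal:
  assumes \<alpha>: "in_A n k \<alpha>" and k: "2 \<le> k" and i: "i \<in> special_legs n \<alpha>"
  shows "\<exists>M c h. sym_unimodal M h \<and> int (\<Sum>v\<in>spider1_verts n. \<alpha> v) = 2 * c + M \<and>
    (\<forall>p q. p + q = (\<Sum>v\<in>spider1_verts n. \<alpha> v) \<longrightarrow>
       Xcoef (spider1_verts n) (spider1_adj n) \<alpha> (content2 p q)
         + Xcoef (spider1_verts n) (spider1_adj n) (phi_leg \<alpha> i) (content2 p q) = h (int p - c))"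
proof (cases "3 \<le> \<alpha> Ucap")
  case True
  then have "Xcoef (spider1_verts n) (spider1_adj n) g (content2 p q) = 0"
    if "g \<in> {\<alpha>, phi_leg \<alpha> i}" for g p q
    using that Xcoef_content2_eq_0_if_weight_ge3[OF finite_spider1_verts, of Ucap]
    by (auto simp: phi_leg_def)
  then show ?thesis by (intro exI[of _ "int (\<Sum>v\<in>spider1_verts n. \<alpha> v)"] exI[of _ 0] exI[of _ "\<lambda>_. 0"])
    (simp add: sym_unimodal_def)
next
  case False
  then show ?thesis using spider1_content2_sym_unimodal_cap_le2[OF assms] by auto
qed

theorem mainTheorem11:
  fixes n k j :: nat and \<alpha> :: "svert \<Rightarrow> nat"
  assumes "in_A n k \<alpha>" and "2 \<le> k" and "1 \<le> j" and "j \<le> k"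
  shows "schur2_nonneg (\<Sum>v\<in>spider1_verts n. \<alpha> v)
           (\<lambda>a. Xcoef (spider1_verts n) (spider1_adj n) \<alpha> a
              + Xcoef (spider1_verts n) (spider1_adj n) (phi n j \<alpha>) a)"
proof -
  define i where "i = sorted_list_of_set (special_legs n \<alpha>) ! (j - 1)"
  have "j - 1 < length (sorted_list_of_set (special_legs n \<alpha>))"
    using assms(3,4) card_special_legs[OF assms(1)] finite_special_legs by simp
  then have i: "i \<in> special_legs n \<alpha>"
    unfolding i_def using finite_special_legs by (metis nth_mem set_sorted_list_of_set)
  have "phi n j \<alpha> = phi_leg \<alpha> i" by (simp add: phi_def phi_leg_def i_def)
  moreover have "1 \<le> (\<Sum>v\<in>spider1_verts n. \<alpha> v)"
    using member_le_sum[of Torso _ \<alpha>] weight_Torso[OF assms(1)] finite_spider1_verts by fastforce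
  moreover obtain M c h where "sym_unimodal M h" "int (\<Sum>v\<in>spider1_verts n. \<alpha> v) = 2 * c + M"
    "\<And>p q. p + q = (\<Sum>v\<in>spider1_verts n. \<alpha> v) \<Longrightarrow>
      Xcoef (spider1_verts n) (spider1_adj n) \<alpha> (content2 p q)
        + Xcoef (spider1_verts n) (spider1_adj n) (phi_leg \<alpha> i) (content2 p q) = h (int p - c)"
    using spider1_content2_sym_unimodal[OF assms(1,2) i] by blast
  ultimately show ?thesis
    using schur2_nonneg_Xcoef_sum[OF finite_spider1_verts] sum_phi_leg[OF assms(1) i] by simp
qed

end
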